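(* Let $\lambda$ be a partition with 2-core $(k,k-1,\dots,1)$ (with $k\ge0$) and 2-quotient $(\mu,\nu)$, and let $\alpha_k=-\tfrac12-\ell(\mu)+\ell(\nu)-k$. Then $$R_\lambda(x)=2^{|\mu|+|\nu|}\,\hat L^{(\alpha_k)}_{\mu,\nu}\!\left(\frac{x}{2}\right),\qquad\text{equivalently}\qquad \mathrm{He}_\lambda(x)=2^{|\mu|+|\nu|}x^{k(k+1)/2}\,\hat L^{(\alpha_k)}_{\mu,\nu}\!\left(\frac{x^2}{2}\right).$$
   Context: Partitions $\lambda=(\lambda_1\ge\dots\ge\lambda_{\ell(\lambda)}>0)$, degree vector $n_i=\lambda_i+\ell(\lambda)-i$, $\Delta(n_\lambda)=\prod_{i<j}(n_j-n_i)$. Hermite: $\mathrm{He}_0=1,\mathrm{He}_1=x,\mathrm{He}_n=x\mathrm{He}_{n-1}-(n-1)\mathrm{He}_{n-2}$; $\mathrm{He}_\lambda=\mathrm{Wr}[\mathrm{He}_{n_1},\dots,\mathrm{He}_{n_{\ell(\lambda)}}]/\Delta(n_\lambda)$. Maya diagram: a set $M\subset\mathbb{Z}$ containing all sufficiently negative integers and finitely many non-negative ones; $\lambda(M)$ has parts the positive values of $\#\{n\notin M:n<m\}$, $m\in M$. $M_\lambda=\{n<0\}\cup\{n_i\}$, $M_\lambda+t=\{m+t:m\in M_\lambda\}$. For partitions $\mu,\nu$ and $k\in\mathbb{Z}$ choose $s,s'\ge0$ with $\ell(\nu)+s'-\ell(\mu)-s=k$ and set $\Phi(\mu,\nu,k)=\lambda(\{2m:m\in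 M_\mu+s\}\cup\{2m+1:m\in M_\nu+s'\})$. Each partition is uniquely $\Phi(\mu,\nu,k)$ with $k\ge0$; $(\mu,\nu)$ is its 2-quotient, $(k,\dots,1)$ its 2-core. $R_\lambda$ is the polynomial with $\mathrm{He}_\lambda(x)=x^{k(k+1)/2}R_\lambda(x^2)$. Laguerre: $\hat L_n^{(\alpha)}(x)=(-1)^n n!\,L_n^{(\alpha)}(x)$ (monic), with $L_n^{(\alpha)}$ the classical Laguerre polynomial. For partitions $\mu,\nu$ with degree vectors $n_\mu=(n_1,\dots,n_{\ell(\mu)})$, $m_\nu=(m_1,\dots,m_{\ell(\nu)})$ and $\alpha\in\mathbb{R}$ such that $n_1,\dots,n_{\ell(\mu)},m_1-\alpha,\dots,m_{\ell(\nu)}-\alpha$ are pairwise distinct, $$\hat L^{(\alpha)}_{\mu,\nu}(x)=\frac{x^{(\ell(\mu)+\alpha)\ell(\nu)}}{\Delta(n_\mu,m_\nu-\alpha)}\mathrm{Wr}\big[\hat L^{(\alpha)}_{n_1},\dots,\hat L^{(\alpha)}_{n_{\ell(\mu)}},x^{-\alpha}\hat L^{(-\alpha)}_{m_1},\dots,x^{-\alpha}\hat L^{(-\alpha)}_{m_{\ell(\nu)}}\big],$$ where $\Delta(n_\mu,m_\nu-\alpha)$ is the Vandermonde determinant (product of $(y_j-y_i)$ over $i<j$) of the list $(n_1,\dots,n_{\ell(\mu)},m_1-\alpha,\dots,m_{\ell(\nu)}-\alpha)$; this is a monic polynomial of degree $|\mu|+|\nu|$. *)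

theory Defs
  imports "HOL-Analysis.Analysis" "HOL-Computational_Algebra.Polynomial"
begin

definition is_partition :: "nat list \<Rightarrow> bool" where
  "is_partition lam \<longleftrightarrow> sorted_wrt (\<ge>) lam \<and> (\<forall>p\<in>set lam. 0 < p)"

definition psize :: "nat list \<Rightarrow> nat" where
  "psize lam = sum_list lam"

text \<open>Degree vector n_i = lam_i + l(lam) - i (i = 1..l), here 0-indexed.\<close>
definition degvec :: "nat list \<Rightarrow> nat list" where
  "degvec lam = map (\<lambda>i. lam ! i + length lam - 1 - i) [0..<length lam]"

definition vandermonde :: "real list \<Rightarrow> real" where
  "vandermonde ys = (\<Prod>j<length ys. \<Prod>i<j. ys ! j - ys ! i)"

definition ldet :: "nat \<Rightarrow> (nat \<Rightarrow> nat \<Rightarrow> 'a::comm_ring_1) \<Rightarrow> 'a" where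
  "ldet n A = (\<Sum>p | p permutes {..<n}. of_int (sign p) * (\<Prod>i<n. A i (p i)))"

fun He :: "nat \<Rightarrow> real poly" where
  "He 0 = 1"
| "He (Suc 0) = [:0, 1:]"
| "He (Suc (Suc n)) = [:0, 1:] * He (Suc n) - smult (real (Suc n)) (He n)"

definition poly_wronskian :: "real poly list \<Rightarrow> real poly" where
  "poly_wronskian ps = ldet (length ps) (\<lambda>i j. (pderiv ^^ i) (ps ! j))"

definition He_part :: "nat list \<Rightarrow> real poly" where
  "He_part lam = smult (1 / vandermonde (map real (degvec lam)))
                   (poly_wronskian (map He (degvec lam)))"

definition maya :: "nat list \<Rightarrow> int set" where
  "maya lam = {n. n < 0} \<union> int ` set (degvec lam)"

definition maya_shift :: "int set \<Rightarrow> int \<Rightarrow> int set" where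
  "maya_shift M t = (\<lambda>m. m + t) ` M"

definition maya_count :: "int set \<Rightarrow> int \<Rightarrow> nat" where
  "maya_count M m = card {n. n \<notin> M \<and> n < m}"

definition partition_of_maya :: "int set \<Rightarrow> nat list" where
  "partition_of_maya M =
     rev (sort (map (maya_count M)
       (sorted_list_of_set {m \<in> M. 0 < maya_count M m})))"

text \<open>Phi(mu,nu,k), with a canonical choice of s, s' >= 0 such that
  l(nu) + s' - l(mu) - s = k.\<close>
definition Phi :: "nat list \<Rightarrow> nat list \<Rightarrow> int \<Rightarrow> nat list" where
  "Phi mu nu k =
    (let d = k + int (length mu) - int (length nu);
         s = (if d \<ge> 0 then 0 else - d);
         s' = (if d \<ge> 0 then d else 0)
     in partition_of_maya
          ((\<lambda>m. 2 * m) ` maya_shift (maya mu) s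
           \<union> (\<lambda>m. 2 * m + 1) ` maya_shift (maya nu) s'))"

definition laguerre :: "nat \<Rightarrow> real \<Rightarrow> real poly" where
  "laguerre n a = (\<Sum>i\<le>n. monom ((-1) ^ i * ((real n + a) gchoose (n - i)) / fact i) i)"

text \<open>Monic Laguerre polynomial (-1)^n n! L_n^(a).\<close>
definition laguerre_hat :: "nat \<Rightarrow> real \<Rightarrow> real poly" where
  "laguerre_hat n a = smult ((-1) ^ n * fact n) (laguerre n a)"

definition wronskian :: "(real \<Rightarrow> real) list \<Rightarrow> real \<Rightarrow> real" where
  "wronskian fs x = ldet (length fs) (\<lambda>i j. (deriv ^^ i) (fs ! j) x)"

text \<open>hat L^(a)_{mu,nu}(x), for x > 0.\<close>
definition laguerre_pair :: "real \<Rightarrow> nat list \<Rightarrow> nat list \<Rightarrow> real \<Rightarrow> real" where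
  "laguerre_pair a mu nu x =
     x powr ((real (length mu) + a) * real (length nu))
     / vandermonde (map real (degvec mu) @ map (\<lambda>m. real m - a) (degvec nu))
     * wronskian (map (\<lambda>n. poly (laguerre_hat n a)) (degvec mu)
                  @ map (\<lambda>m y. y powr (- a) * poly (laguerre_hat m (- a)) y) (degvec nu)) x"

end

theory Submission
  imports Defs "Jordan_Normal_Form.Determinant"
begin

text \<open>
  Both sides are Wronskians divided by Vandermonde products of the degrees. Writing
  \<open>He (2 a) = 2^a L_a^(-1/2) (x^2/2)\<close> and \<open>He (2 a + 1) = 2^a x L_a^(1/2) (x^2/2)\<close>, the chain rule
  for \<open>z = x^2/2\<close> turns the Hermite Wronskian of the merged Maya diagram of the 2-quotient into
  a Wronskian of the functions \<open>L_n^(alpha) (z)\<close> and \<open>z^(-alpha) L_m^(-alpha) (z)\<close> with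
  \<open>alpha = -1/2\<close>, times explicit powers of \<open>x\<close> and \<open>2\<close>. Shifting a Maya diagram does not
  change the Hermite quotient, while on the Laguerre side expanding along a leading column
  \<open>L_0\<close> (resp. \<open>z^(-alpha)\<close>) replaces \<open>alpha\<close> by \<open>alpha + 1\<close> (resp. \<open>alpha - 1\<close>);
  undoing the shifts \<open>s, s'\<close> of the two Maya diagrams produces \<open>alpha_k\<close>. Negative \<open>x\<close>
  follow from the parity of the Hermite polynomials.
\<close>

hide_const (open) module.smult

subsection \<open>Determinants\<close>

lemma ldet_eq_det: "ldet n A = Determinant.det (mat n n (\<lambda>(i, j). A i j))"
  unfolding ldet_def Determinant.det_def by (auto simp: atLeast0LessThan intro!: sum.cong prod.cong)

lemma ldet_cong:
  "(\<And>i j. i < n \<Longrightarrow> j < n \<Longrightarrow> A i j = B i j) \<Longrightarrow> ldet n A = ldet n B"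
  unfolding ldet_def by (intro sum.cong refl arg_cong2[where f = "(*)"] prod.cong) (auto simp: permutes_def)

lemma ldet_permute_cols:
  assumes "\<sigma> permutes {..<n}"
  shows "ldet n (\<lambda>i j. A i (\<sigma> j)) = of_int (sign \<sigma>) * ldet n A"
proof -
  let ?A = "mat n n (\<lambda>(i, j). A i j)"
  have \<sigma>: "\<sigma> permutes {0..<n}" using assms by (simp add: atLeast0LessThan)
  have "transpose_mat (mat n n (\<lambda>(i, j). A i (\<sigma> j))) = mat n n (\<lambda>(i, j). transpose_mat ?A $$ (\<sigma> i, j))"
    using permutes_in_image[OF assms] by (intro eq_matI) auto
  then have "ldet n (\<lambda>i j. A i (\<sigma> j)) = Determinant.det (mat n n (\<lambda>(i, j). transpose_mat ?A $$ (\<sigma> i, j)))"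
    by (metis ldet_eq_det det_transpose mat_carrier)
  also have "\<dots> = of_int (sign \<sigma>) * Determinant.det (transpose_mat ?A)"
    by (rule det_permute_rows[OF _ \<sigma>]) auto
  finally show ?thesis using det_transpose[of ?A n] by (simp add: ldet_eq_det)
qed

lemma ldet_scale_cols: "ldet n (\<lambda>i j. c j * A i j) = (\<Prod>j<n. c j) * ldet n A"
proof -
  have "(\<Prod>i<n. c (p i) * A i (p i)) = (\<Prod>j<n. c j) * (\<Prod>i<n. A i (p i))" if "p permutes {..<n}" for p
    using prod.permute[OF that, of c] by (simp add: comp_def prod.distrib)
  then show ?thesis unfolding ldet_def by (simp add: sum_distrib_left algebra_simps)
qed

lemma ldet_scale_rows: "ldet n (\<lambda>i j. c i * A i j) = (\<Prod>i<n. c i) * ldet n A"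
  unfolding ldet_def by (simp add: sum_distrib_left algebra_simps prod.distrib)

lemma ldet_lower_triangular_mult:
  fixes A B C :: "nat \<Rightarrow> nat \<Rightarrow> 'a::comm_ring_1"
  assumes "\<And>i j. i < n \<Longrightarrow> j < n \<Longrightarrow> B i j = (\<Sum>l\<le>i. C i l * A l j)"
  shows "ldet n B = (\<Prod>i<n. C i i) * ldet n A"
proof -
  let ?C = "mat n n (\<lambda>(i, l). if l \<le> i then C i l else 0)"
  let ?A = "mat n n (\<lambda>(i, j). A i j)"
  have "(\<Sum>l = 0..<n. (if l \<le> i then C i l else 0) * A l j) = (\<Sum>l\<le>i. C i l * A l j)" if "i < n" for i j
    using that by (intro sum.mono_neutral_cong_right) auto
  then have "mat n n (\<lambda>(i, j). B i j) = ?C * ?A"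
    using assms by (intro eq_matI) (auto simp: scalar_prod_def)
  moreover have "Determinant.det ?C = (\<Prod>i<n. C i i)"
    by (subst det_lower_triangular[of n]) (auto simp: prod_list_diag_prod atLeast0LessThan)
  ultimately show ?thesis using det_mult[of ?C n ?A] by (simp add: ldet_eq_det)
qed

lemma ldet_unit_first_col:
  fixes A :: "nat \<Rightarrow> nat \<Rightarrow> 'a::comm_ring_1"
  assumes "A 0 0 = 1" "\<And>i. 0 < i \<Longrightarrow> i \<le> n \<Longrightarrow> A i 0 = 0"
  shows "ldet (Suc n) A = ldet n (\<lambda>i j. A (Suc i) (Suc j))"
proof -
  let ?A = "mat (Suc n) (Suc n) (\<lambda>(i, j). A i j)"
  have "Determinant.det ?A = (\<Sum>i<Suc n. ?A $$ (i, 0) * cofactor ?A i 0)"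
    by (rule laplace_expansion_column) auto
  also have "\<dots> = cofactor ?A 0 0"
    by (subst sum.lessThan_Suc_shift) (use assms in auto)
  also have "\<dots> = Determinant.det (mat n n (\<lambda>(i, j). A (Suc i) (Suc j)))"
    unfolding cofactor_def mat_delete_def by (auto intro!: arg_cong[where f = Determinant.det])
  finally show ?thesis by (simp add: ldet_eq_det)
qed

lemma ldet_binomial_convolution:
  "ldet n (\<lambda>i j. \<Sum>l\<le>i. of_nat (i choose l) * F j l * H (i - l)) = H 0 ^ n * ldet n (\<lambda>i j. F j i)"
proof -
  have "ldet n (\<lambda>i j. \<Sum>l\<le>i. of_nat (i choose l) * F j l * H (i - l))
      = (\<Prod>i<n. of_nat (i choose i) * H (i - i)) * ldet n (\<lambda>i j. F j i)"
    by (rule ldet_lower_triangular_mult) (simp add: algebra_simps)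
  then show ?thesis by simp
qed

subsection \<open>Vandermonde products and alternants\<close>

lemma sum_lessThan_id: "(\<Sum>j<n. j) = n * (n - 1) div (2::nat)"
proof -
  have "2 * (\<Sum>j<n. j) = n * (n - 1)"
    by (induction n) (auto simp: algebra_simps)
  then show ?thesis by simp
qed

lemma vandermonde_Cons:
  "vandermonde (y # ys) = (\<Prod>j<length ys. ys ! j - y) * vandermonde ys"
proof -
  have "vandermonde (y # ys) = (\<Prod>j<length ys. \<Prod>i<Suc j. (y # ys) ! Suc j - (y # ys) ! i)"
    unfolding vandermonde_def length_Cons by (subst prod.lessThan_Suc_shift) simp
  also have "\<dots> = (\<Prod>j<length ys. (ys ! j - y) * (\<Prod>i<j. ys ! j - ys ! i))"
    by (intro prod.cong refl, subst prod.lessThan_Suc_shift) simp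
  finally show ?thesis by (simp add: vandermonde_def prod.distrib)
qed

lemma vandermonde_eq_ldet: "vandermonde ys = ldet (length ys) (\<lambda>i j. (ys ! j) ^ i)"
proof (induction ys)
  case Nil
  then show ?case by (simp add: vandermonde_def ldet_def)
next
  case (Cons y ys)
  let ?n = "length ys"
  let ?A = "\<lambda>i j. ((y # ys) ! j) ^ i"
  let ?C = "\<lambda>i l. if l = i then 1 else if Suc l = i then - y else 0"
  let ?B = "\<lambda>i j. if i = 0 then 1 else ((y # ys) ! j) ^ (i - 1) * ((y # ys) ! j - y)"
  \<comment> \<open>subtract y times each row from the next\<close>
  have "?B i j = (\<Sum>l\<le>i. ?C i l * ?A l j)" for i j
  proof (cases i)
    case (Suc i')
    have "(\<Sum>l\<le>i. ?C i l * ?A l j) = (\<Sum>l\<in>{i', i}. ?C i l * ?A l j)"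
      by (rule sum.mono_neutral_right) (auto simp: Suc)
    then show ?thesis using Suc by (simp add: algebra_simps)
  qed simp
  then have "ldet (Suc ?n) ?B = ldet (Suc ?n) ?A"
    using ldet_lower_triangular_mult[of "Suc ?n" ?B ?C ?A] by simp
  moreover have "ldet (Suc ?n) ?B = ldet ?n (\<lambda>i j. (ys ! j - y) * (ys ! j) ^ i)"
    by (subst ldet_unit_first_col) (auto intro: ldet_cong simp: mult.commute)
  ultimately show ?case using Cons by (simp add: ldet_scale_cols vandermonde_Cons)
qed

lemma vandermonde_translate: "vandermonde (map (\<lambda>y. y + c) ys) = vandermonde ys"
  by (simp add: vandermonde_def)

lemma vandermonde_scale:
  "vandermonde (map (\<lambda>y. c * y) ys) = c ^ (length ys * (length ys - 1) div 2) * vandermonde ys"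
proof -
  have "vandermonde (map (\<lambda>y. c * y) ys) = (\<Prod>j<length ys. c ^ j) * vandermonde ys"
    by (simp add: vandermonde_def prod.distrib right_diff_distrib[symmetric])
  also have "(\<Prod>j<length ys. c ^ j) = c ^ (length ys * (length ys - 1) div 2)"
    by (simp add: power_sum[symmetric] sum_lessThan_id)
  finally show ?thesis .
qed

text \<open>Both sides of the theorem are Wronskians divided by the Vandermonde product of the
  degrees, i.e. quotients of this form.\<close>
definition alternant_quotient :: "(nat \<Rightarrow> 'b \<Rightarrow> real) \<Rightarrow> ('b \<Rightarrow> real) \<Rightarrow> 'b list \<Rightarrow> real" where
  "alternant_quotient E v xs = ldet (length xs) (\<lambda>i j. E i (xs ! j)) / vandermonde (map v xs)"

lemma alternant_quotient_mset_eq: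
  assumes "mset xs = mset ys"
  shows "alternant_quotient E v xs = alternant_quotient E v ys"
proof -
  obtain p where p: "p permutes {..<length xs}" "permute_list p xs = ys"
    using mset_eq_permutation[of ys xs] assms by metis
  have len: "length ys = length xs" using p(2) by (metis length_permute_list)
  have sign: "ldet (length ys) (\<lambda>i j. F i (ys ! j)) = of_int (sign p) * ldet (length xs) (\<lambda>i j. F i (xs ! j))"
    for F :: "nat \<Rightarrow> _ \<Rightarrow> real"
  proof -
    have "ldet (length ys) (\<lambda>i j. F i (ys ! j)) = ldet (length xs) (\<lambda>i j. F i (xs ! p j))"
      unfolding len using p by (intro ldet_cong) (simp add: p(2)[symmetric] permute_list_nth)
    then show ?thesis using ldet_permute_cols[OF p(1), of "\<lambda>i j. F i (xs ! j)"] by simp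
  qed
  have vdm: "vandermonde (map v zs) = ldet (length zs) (\<lambda>i j. v (zs ! j) ^ i)" for zs
    unfolding vandermonde_eq_ldet length_map by (rule ldet_cong) simp
  show ?thesis
    unfolding alternant_quotient_def vdm sign[of E] sign[of "\<lambda>i x. v x ^ i"] by (simp add: sign_def)
qed

text \<open>Laplace expansion along a first column \<open>(1, 0, 0, ...)\<close>: the factors pulled out of the
  remaining columns cancel against those of the Vandermonde product.\<close>
lemma alternant_quotient_Cons_unit:
  assumes "E 0 x0 = 1" "\<And>i. 0 < i \<Longrightarrow> E i x0 = 0"
    and "\<And>y i. y \<in> set ys \<Longrightarrow> E (Suc i) (f y) = (v (f y) - v x0) * E' i y"
    and "\<And>y. y \<in> set ys \<Longrightarrow> v (f y) = v' y + c"
    and "\<And>y. y \<in> set ys \<Longrightarrow> v (f y) \<noteq> v x0"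
  shows "alternant_quotient E v (x0 # map f ys) = alternant_quotient E' v' ys"
proof -
  let ?w = "\<lambda>j. v (f (ys ! j)) - v x0"
  have "ldet (Suc (length ys)) (\<lambda>i j. E i ((x0 # map f ys) ! j))
      = ldet (length ys) (\<lambda>i j. ?w j * E' i (ys ! j))"
    by (subst ldet_unit_first_col) (auto intro!: ldet_cong simp: assms(1,2,3))
  moreover have "vandermonde (map v (x0 # map f ys)) = (\<Prod>j<length ys. ?w j) * vandermonde (map v' ys)"
  proof -
    have "map v (x0 # map f ys) = v x0 # map (\<lambda>y. y + c) (map v' ys)" using assms(4) by simp
    then show ?thesis by (simp only: vandermonde_Cons vandermonde_translate) simp
  qed
  moreover have "(\<Prod>j<length ys. ?w j) \<noteq> 0" using assms(5) by simp
  ultimately show ?thesis by (simp add: alternant_quotient_def ldet_scale_cols)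
qed

subsection \<open>Sequences of derivatives on the positive half-line\<close>

definition derivs_on_pos :: "(real \<Rightarrow> real) \<Rightarrow> (nat \<Rightarrow> real \<Rightarrow> real) \<Rightarrow> bool" where
  "derivs_on_pos f D \<longleftrightarrow>
     (\<forall>y>0. D 0 y = f y) \<and> (\<forall>i y. y > 0 \<longrightarrow> (D i has_real_derivative D (Suc i) y) (at y))"

lemma derivs_on_posD:
  "derivs_on_pos f D \<Longrightarrow> y > 0 \<Longrightarrow> D 0 y = f y"
  "derivs_on_pos f D \<Longrightarrow> y > 0 \<Longrightarrow> (D i has_real_derivative D (Suc i) y) (at y)"
  unfolding derivs_on_pos_def by auto

lemma derivs_on_pos_funpow_deriv:
  assumes "derivs_on_pos f D" "y > 0"
  shows "(deriv ^^ i) f y = D i y"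
  using assms(2)
proof (induction i arbitrary: y)
  case 0
  then show ?case using derivs_on_posD(1)[OF assms(1)] by simp
next
  case (Suc i)
  have "((deriv ^^ i) f has_real_derivative D (Suc i) y) (at y)"
    by (rule has_field_derivative_transform_within_open[OF derivs_on_posD(2)[OF assms(1) Suc.prems],
          of "{0<..}"]) (use Suc in auto)
  then show ?case by (simp add: DERIV_imp_deriv)
qed

lemma derivs_on_pos_unique:
  "derivs_on_pos f D \<Longrightarrow> derivs_on_pos f D' \<Longrightarrow> y > 0 \<Longrightarrow> D i y = D' i y"
  using derivs_on_pos_funpow_deriv by metis

lemma derivs_on_pos_cong:
  "derivs_on_pos f D \<Longrightarrow> (\<And>y. y > 0 \<Longrightarrow> f y = g y) \<Longrightarrow> derivs_on_pos g D"
  unfolding derivs_on_pos_def by auto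

lemma derivs_on_pos_cong_derivs:
  assumes "derivs_on_pos f D" "\<And>i y. y > 0 \<Longrightarrow> D i y = D' i y"
  shows "derivs_on_pos f D'"
  unfolding derivs_on_pos_def
proof (intro conjI allI impI)
  fix i :: nat and y :: real
  assume y: "y > 0"
  have "(D i has_real_derivative D' (Suc i) y) (at y)"
    using derivs_on_posD(2)[OF assms(1) y] assms(2)[OF y] by simp
  then show "(D' i has_real_derivative D' (Suc i) y) (at y)"
    by (rule has_field_derivative_transform_within_open[of _ _ _ "{0<..}"]) (use y assms(2) in auto)
qed (use assms derivs_on_posD(1) in force)

lemma derivs_on_pos_Suc: "derivs_on_pos f D \<Longrightarrow> derivs_on_pos (D 1) (\<lambda>i. D (Suc i))"
  unfolding derivs_on_pos_def by auto

lemma derivs_on_pos_cmult: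
  "derivs_on_pos f D \<Longrightarrow> derivs_on_pos (\<lambda>y. c * f y) (\<lambda>i y. c * D i y)"
  unfolding derivs_on_pos_def by (auto intro: DERIV_cmult)

lemma derivs_on_pos_poly: "derivs_on_pos (poly p) (\<lambda>i. poly ((pderiv ^^ i) p))"
  unfolding derivs_on_pos_def by (auto intro: poly_DERIV)

lemma sum_binomial_Suc:
  fixes F G :: "nat \<Rightarrow> real"
  shows "(\<Sum>l\<le>n. of_nat (n choose l) * (F (Suc l) * G (n - l) + F l * G (Suc (n - l))))
       = (\<Sum>l\<le>Suc n. of_nat (Suc n choose l) * F l * G (Suc n - l))"
proof -
  have "(\<Sum>l\<le>Suc n. of_nat (Suc n choose l) * F l * G (Suc n - l))
      = F 0 * G (Suc n) + (\<Sum>l\<le>n. of_nat (Suc n choose Suc l) * F (Suc l) * G (n - l))"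
    by (subst sum.atMost_Suc_shift) simp
  also have "(\<Sum>l\<le>n. of_nat (Suc n choose Suc l) * F (Suc l) * G (n - l))
      = (\<Sum>l\<le>n. of_nat (n choose l) * F (Suc l) * G (n - l))
        + (\<Sum>l\<le>n. of_nat (n choose Suc l) * F (Suc l) * G (n - l))"
    by (simp add: sum.distrib algebra_simps)
  also have "(\<Sum>l\<le>n. of_nat (n choose Suc l) * F (Suc l) * G (n - l))
      = (\<Sum>l\<le>Suc n. of_nat (n choose l) * F l * G (Suc n - l)) - F 0 * G (Suc n)"
    by (subst sum.atMost_Suc_shift) simp
  also have "(\<Sum>l\<le>Suc n. of_nat (n choose l) * F l * G (Suc n - l))
      = (\<Sum>l\<le>n. of_nat (n choose l) * F l * G (Suc (n - l)))"
    by (simp add: Suc_diff_le)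
  finally show ?thesis by (simp add: sum.distrib algebra_simps)
qed

lemma derivs_on_pos_mult:
  assumes "derivs_on_pos f D" "derivs_on_pos g D'"
  shows "derivs_on_pos (\<lambda>y. f y * g y) (\<lambda>i y. \<Sum>l\<le>i. of_nat (i choose l) * D l y * D' (i - l) y)"
  unfolding derivs_on_pos_def
proof (intro conjI allI impI)
  fix y :: real
  assume "y > 0"
  then show "(\<Sum>l\<le>0. of_nat (0 choose l) * D l y * D' (0 - l) y) = f y * g y"
    using derivs_on_posD(1)[OF assms(1)] derivs_on_posD(1)[OF assms(2)] by simp
next
  fix i :: nat and y :: real
  assume y: "y > 0"
  have "((\<lambda>y. \<Sum>l\<le>i. of_nat (i choose l) * D l y * D' (i - l) y) has_real_derivative
        (\<Sum>l\<le>i. of_nat (i choose l) * (D (Suc l) y * D' (i - l) y + D l y * D' (Suc (i - l)) y))) (at y)"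
    by (auto intro!: derivative_eq_intros DERIV_sum derivs_on_posD(2)[OF assms(1) y]
          derivs_on_posD(2)[OF assms(2) y] simp: algebra_simps)
  then show "((\<lambda>y. \<Sum>l\<le>i. of_nat (i choose l) * D l y * D' (i - l) y) has_real_derivative
        (\<Sum>l\<le>Suc i. of_nat (Suc i choose l) * D l y * D' (Suc i - l) y)) (at y)"
    using sum_binomial_Suc[of i "\<lambda>l. D l y" "\<lambda>l. D' l y"] by simp
qed

text \<open>The derivatives of \<open>y powr c * p y\<close> have the form \<open>y powr (c - i) * q\<^sub>i y\<close>
  with polynomials \<open>q\<^sub>i\<close> generated by the Euler-type operator below.\<close>
fun powr_poly_derivs :: "real \<Rightarrow> real poly \<Rightarrow> nat \<Rightarrow> real poly" where
  "powr_poly_derivs c p 0 = p"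
| "powr_poly_derivs c p (Suc i) =
     smult (c - real i) (powr_poly_derivs c p i) + [:0, 1:] * pderiv (powr_poly_derivs c p i)"

lemma derivs_on_pos_powr_poly:
  "derivs_on_pos (\<lambda>y. y powr c * poly p y) (\<lambda>i y. y powr (c - real i) * poly (powr_poly_derivs c p i) y)"
  unfolding derivs_on_pos_def
proof (intro conjI allI impI)
  fix i :: nat and y :: real
  assume y: "y > 0"
  let ?q = "powr_poly_derivs c p i"
  have "((\<lambda>y. y powr (c - real i) * poly ?q y) has_real_derivative
          (c - real i) * y powr (c - real i - 1) * poly ?q y + y powr (c - real i) * poly (pderiv ?q) y) (at y)"
    using y by (auto intro!: derivative_eq_intros poly_DERIV)
  also have "y powr (c - real i) = y powr (c - real (Suc i)) * y"
    using y by (simp add: powr_diff powr_add)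
  finally show "((\<lambda>y. y powr (c - real i) * poly ?q y) has_real_derivative
          y powr (c - real (Suc i)) * poly (powr_poly_derivs c p (Suc i)) y) (at y)"
    by (simp add: algebra_simps)
qed simp

text \<open>Faa di Bruno for the inner function \<open>x\<^sup>2 / 2\<close>: the \<open>i\<close>-th derivative of
  \<open>F (x\<^sup>2 / 2)\<close> is \<open>\<Sum>l\<le>i. chain_coeff i l x * F\<^sup>(\<^sup>l\<^sup>) (x\<^sup>2 / 2)\<close>.\<close>
fun chain_coeff :: "nat \<Rightarrow> nat \<Rightarrow> real poly" where
  "chain_coeff 0 l = (if l = 0 then 1 else 0)"
| "chain_coeff (Suc i) l = pderiv (chain_coeff i l) + (if l = 0 then 0 else [:0, 1:] * chain_coeff i (l - 1))"

lemma chain_coeff_eq_0: "i < l \<Longrightarrow> chain_coeff i l = 0"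
  by (induction i arbitrary: l) auto

lemma chain_coeff_diag: "chain_coeff i i = [:0, 1:] ^ i"
  by (induction i) (auto simp: chain_coeff_eq_0)

lemma derivs_on_pos_half_square:
  assumes "derivs_on_pos F D"
  shows "derivs_on_pos (\<lambda>x. F (x\<^sup>2 / 2)) (\<lambda>i x. \<Sum>l\<le>i. poly (chain_coeff i l) x * D l (x\<^sup>2 / 2))"
  unfolding derivs_on_pos_def
proof (intro conjI allI impI)
  fix x :: real
  assume "x > 0"
  then show "(\<Sum>l\<le>0. poly (chain_coeff 0 l) x * D l (x\<^sup>2 / 2)) = F (x\<^sup>2 / 2)"
    using derivs_on_posD(1)[OF assms, of "x\<^sup>2 / 2"] by simp
next
  fix i :: nat and x :: real
  assume x: "x > 0"
  have "((\<lambda>x. D l (x\<^sup>2 / 2)) has_real_derivative D (Suc l) (x\<^sup>2 / 2) * x) (at x)" for l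
    using x by (intro DERIV_chain2[where f = "D l" and g = "\<lambda>x. x\<^sup>2 / 2"] derivs_on_posD(2)[OF assms])
      (auto intro!: derivative_eq_intros)
  then have "((\<lambda>x. \<Sum>l\<le>i. poly (chain_coeff i l) x * D l (x\<^sup>2 / 2)) has_real_derivative
     (\<Sum>l\<le>i. poly (pderiv (chain_coeff i l)) x * D l (x\<^sup>2 / 2)
              + x * poly (chain_coeff i l) x * D (Suc l) (x\<^sup>2 / 2))) (at x)"
    by (auto intro!: DERIV_sum derivative_eq_intros poly_DERIV simp: algebra_simps)
  also have "(\<Sum>l\<le>i. poly (pderiv (chain_coeff i l)) x * D l (x\<^sup>2 / 2)
              + x * poly (chain_coeff i l) x * D (Suc l) (x\<^sup>2 / 2))
      = (\<Sum>l\<le>Suc i. poly (chain_coeff (Suc i) l) x * D l (x\<^sup>2 / 2))"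
  proof -
    have "(\<Sum>l\<le>Suc i. poly (chain_coeff (Suc i) l) x * D l (x\<^sup>2 / 2))
        = (\<Sum>l\<le>Suc i. poly (pderiv (chain_coeff i l)) x * D l (x\<^sup>2 / 2))
          + (\<Sum>l\<le>Suc i. (if l = 0 then 0 else x * poly (chain_coeff i (l - 1)) x * D l (x\<^sup>2 / 2)))"
      by (simp add: sum.distrib[symmetric] algebra_simps, intro sum.cong) auto
    also have "(\<Sum>l\<le>Suc i. poly (pderiv (chain_coeff i l)) x * D l (x\<^sup>2 / 2))
        = (\<Sum>l\<le>i. poly (pderiv (chain_coeff i l)) x * D l (x\<^sup>2 / 2))"
      by (simp add: chain_coeff_eq_0)
    also have "(\<Sum>l\<le>Suc i. (if l = 0 then 0 else x * poly (chain_coeff i (l - 1)) x * D l (x\<^sup>2 / 2)))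
        = (\<Sum>l\<le>i. x * poly (chain_coeff i l) x * D (Suc l) (x\<^sup>2 / 2))"
      by (subst sum.atMost_Suc_shift) simp
    finally show ?thesis by (simp add: sum.distrib)
  qed
  finally show "((\<lambda>x. \<Sum>l\<le>i. poly (chain_coeff i l) x * D l (x\<^sup>2 / 2)) has_real_derivative
     (\<Sum>l\<le>Suc i. poly (chain_coeff (Suc i) l) x * D l (x\<^sup>2 / 2))) (at x)" .
qed

lemma ldet_chain_coeff:
  "ldet n (\<lambda>i j. \<Sum>l\<le>i. poly (chain_coeff i l) x * F j l)
   = x ^ (n * (n - 1) div 2) * ldet n (\<lambda>i j. F j i)"
proof -
  have "ldet n (\<lambda>i j. \<Sum>l\<le>i. poly (chain_coeff i l) x * F j l)
      = (\<Prod>i<n. poly (chain_coeff i i) x) * ldet n (\<lambda>i j. F j i)"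
    by (rule ldet_lower_triangular_mult) simp
  then show ?thesis by (simp add: chain_coeff_diag power_sum[symmetric] sum_lessThan_id)
qed

lemma wronskian_eq_ldet:
  assumes "length Ds = length fs" "\<And>j. j < length fs \<Longrightarrow> derivs_on_pos (fs ! j) (Ds ! j)" "y > 0"
  shows "wronskian fs y = ldet (length fs) (\<lambda>i j. (Ds ! j) i y)"
  unfolding wronskian_def using assms by (intro ldet_cong) (simp add: derivs_on_pos_funpow_deriv)

subsection \<open>Laguerre polynomials\<close>

lemma coeff_laguerre_hat:
  "coeff (laguerre_hat n b) i =
     (if i \<le> n then (-1) ^ (n + i) * fact n * ((real n + b) gchoose (n - i)) / fact i else 0)"
proof -
  have "coeff (laguerre n b) i =
      (\<Sum>j\<le>n. if j = i then (-1) ^ j * ((real n + b) gchoose (n - j)) / fact j else 0)"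
    unfolding laguerre_def coeff_sum coeff_monom by (intro sum.cong) auto
  then show ?thesis unfolding laguerre_hat_def coeff_smult by (simp add: power_add)
qed

lemma laguerre_hat_0 [simp]: "laguerre_hat 0 b = 1"
  by (simp add: laguerre_hat_def laguerre_def)

lemma coeff_x_mult: "coeff ([:0, 1:] * (p :: real poly)) i = (if i = 0 then 0 else coeff p (i - 1))"
  by (cases i) simp_all

lemma Suc_mult_divide_fact_Suc: "real (Suc i) * (X / fact (Suc i)) = X / fact i"
  by simp

lemma pderiv_laguerre_hat_Suc:
  "pderiv (laguerre_hat (Suc n) a) = smult (real (Suc n)) (laguerre_hat n (a + 1))"
proof (rule poly_eqI)
  fix i
  show "coeff (pderiv (laguerre_hat (Suc n) a)) i = coeff (smult (real (Suc n)) (laguerre_hat n (a + 1))) i"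
  proof (cases "i \<le> n")
    case True
    have "coeff (pderiv (laguerre_hat (Suc n) a)) i
        = real (Suc i) * ((-1) ^ (Suc n + Suc i) * fact (Suc n) * ((real (Suc n) + a) gchoose (n - i))
            / fact (Suc i))"
      using True by (simp add: coeff_pderiv coeff_laguerre_hat)
    also have "\<dots> = (-1) ^ (Suc n + Suc i) * fact (Suc n) * ((real (Suc n) + a) gchoose (n - i)) / fact i"
      by (rule Suc_mult_divide_fact_Suc)
    also have "real (Suc n) + a = real n + (a + 1)"
      by simp
    finally show ?thesis using True by (simp add: coeff_laguerre_hat)
  qed (simp add: coeff_pderiv coeff_laguerre_hat)
qed

lemma laguerre_hat_Euler:
  "smult b (laguerre_hat m b) + [:0, 1:] * pderiv (laguerre_hat m b)
     = smult (real m + b) (laguerre_hat m (b - 1))"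
proof (rule poly_eqI)
  fix i
  have "coeff ([:0, 1:] * pderiv (laguerre_hat m b)) i = real i * coeff (laguerre_hat m b) i"
    by (cases i) (simp_all add: coeff_x_mult coeff_pderiv)
  then have lhs: "coeff (smult b (laguerre_hat m b) + [:0, 1:] * pderiv (laguerre_hat m b)) i
      = (b + real i) * coeff (laguerre_hat m b) i"
    by (simp add: algebra_simps)
  show "coeff (smult b (laguerre_hat m b) + [:0, 1:] * pderiv (laguerre_hat m b)) i
      = coeff (smult (real m + b) (laguerre_hat m (b - 1))) i"
  proof (cases "i \<le> m")
    case True
    have "real m + b - real (m - i) = b + real i"
      using True by simp
    then have binomial: "(b + real i) * ((real m + b) gchoose (m - i))
        = (real m + b) * ((real m + (b - 1)) gchoose (m - i))"
      using gbinomial_absorb_comp[of "real m + b" "m - i"] by (simp add: diff_add_eq add_diff_eq)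
    have "(b + real i) * coeff (laguerre_hat m b) i
        = (-1) ^ (m + i) * fact m * ((b + real i) * ((real m + b) gchoose (m - i))) / fact i"
      using True by (simp add: coeff_laguerre_hat)
    also have "\<dots> = coeff (smult (real m + b) (laguerre_hat m (b - 1))) i"
      unfolding binomial using True by (simp add: coeff_laguerre_hat)
    finally show ?thesis unfolding lhs .
  qed (unfold lhs, simp add: coeff_laguerre_hat)
qed

lemma laguerre_hat_param_plus_1: "laguerre_hat n (b + 1) = laguerre_hat n b - pderiv (laguerre_hat n b)"
proof (rule poly_eqI)
  fix i
  show "coeff (laguerre_hat n (b + 1)) i = coeff (laguerre_hat n b - pderiv (laguerre_hat n b)) i"
  proof (cases "i < n")
    case True
    then obtain k where k: "n - i = Suc k" "n - Suc i = k" by (metis Suc_diff_Suc)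
    have g: "(real n + (b + 1)) gchoose (Suc k) = ((real n + b) gchoose k) + ((real n + b) gchoose (Suc k))"
      using gbinomial_Suc_Suc[of "real n + b" k] by (simp add: add.assoc)
    have "coeff (laguerre_hat n b - pderiv (laguerre_hat n b)) i =
       (-1) ^ (n + i) * fact n * ((real n + b) gchoose Suc k) / fact i
       - real (Suc i) * ((-1) ^ (n + Suc i) * fact n * ((real n + b) gchoose k) / fact (Suc i))"
      using True k by (simp add: coeff_pderiv coeff_laguerre_hat)
    also have "\<dots> = (-1) ^ (n + i) * fact n * ((real n + b) gchoose Suc k) / fact i
       - (-1) ^ (n + Suc i) * fact n * ((real n + b) gchoose k) / fact i"
      by (subst Suc_mult_divide_fact_Suc) simp
    also have "\<dots> = (-1) ^ (n + i) * fact n * (((real n + b) gchoose Suc k) + ((real n + b) gchoose k)) / fact i"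
      by (simp add: algebra_simps add_divide_distrib)
    also have "\<dots> = coeff (laguerre_hat n (b + 1)) i"
      using True k g by (simp add: coeff_laguerre_hat)
    finally show ?thesis by simp
  next
    case False
    then show ?thesis by (cases "i = n") (simp_all add: coeff_pderiv coeff_laguerre_hat)
  qed
qed

text \<open>Eliminate \<open>laguerre_hat (Suc n) b\<close> from the Euler identity for it, using the two
  identities above.\<close>
lemma laguerre_hat_Suc_param_minus_1:
  "laguerre_hat (Suc n) (b - 1)
     = [:0, 1:] * laguerre_hat n b - smult b (laguerre_hat n b) - [:0, 1:] * pderiv (laguerre_hat n b)"
proof -
  let ?Q = "laguerre_hat (Suc n) (b - 1)" and ?P = "laguerre_hat n b"
  have dQ: "pderiv ?Q = smult (real (Suc n)) ?P"
    using pderiv_laguerre_hat_Suc[of n "b - 1"] by simp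
  have Qb: "laguerre_hat (Suc n) b = ?Q - smult (real (Suc n)) ?P"
    using laguerre_hat_param_plus_1[of "Suc n" "b - 1"] dQ by simp
  have E: "smult (real (Suc n) + b) ?Q
      = smult b (laguerre_hat (Suc n) b) + [:0, 1:] * pderiv (laguerre_hat (Suc n) b)"
    by (rule laguerre_hat_Euler[symmetric])
  have dL: "pderiv (laguerre_hat (Suc n) b) = smult (real (Suc n)) (?P - pderiv ?P)"
    by (simp add: pderiv_laguerre_hat_Suc laguerre_hat_param_plus_1)
  have "poly ?Q x = poly ([:0, 1:] * ?P - smult b ?P - [:0, 1:] * pderiv ?P) x" for x
  proof -
    have "(real (Suc n) + b) * poly ?Q x
        = b * (poly ?Q x - real (Suc n) * poly ?P x) + x * (real (Suc n) * (poly ?P x - poly (pderiv ?P) x))"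
      using arg_cong[OF E[unfolded dL, unfolded Qb], of "\<lambda>p. poly p x"] by simp
    then have "real (Suc n) * poly ?Q x = real (Suc n) * (x * poly ?P x - b * poly ?P x - x * poly (pderiv ?P) x)"
      by (simp add: algebra_simps)
    then show ?thesis by simp
  qed
  then show ?thesis using poly_eq_poly_eq_iff by blast
qed

subsection \<open>Hermite polynomials\<close>

lemma higher_pderiv_1: "0 < i \<Longrightarrow> (pderiv ^^ i) (1 :: 'a::idom poly) = 0"
  by (induction i) (auto simp: funpow_Suc_right simp del: funpow.simps)

lemma pderiv_He_Suc: "pderiv (He (Suc n)) = smult (real (Suc n)) (He n)"
proof (induction n rule: He.induct)
  case 1
  then show ?case by (simp add: pderiv_pCons)
next
  case 2
  then show ?case by (simp add: pderiv_pCons numeral_2_eq_2 pderiv_mult)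
next
  case (3 n)
  have "pderiv (He (Suc (Suc (Suc n))))
      = He (Suc (Suc n)) + [:0, 1:] * pderiv (He (Suc (Suc n))) - smult (real (Suc (Suc n))) (pderiv (He (Suc n)))"
    by (simp only: He.simps(3) pderiv_diff pderiv_mult pderiv_smult) (simp add: pderiv_pCons)
  also have "\<dots> = He (Suc (Suc n))
      + smult (real (Suc (Suc n))) ([:0, 1:] * He (Suc n) - smult (real (Suc n)) (He n))"
    by (simp only: 3 mult_smult_right smult_diff_right smult_smult add_diff_eq mult.commute)
  also have "\<dots> = He (Suc (Suc n)) + smult (real (Suc (Suc n))) (He (Suc (Suc n)))"
    by (simp only: He.simps(3))
  also have "\<dots> = smult (1 + real (Suc (Suc n))) (He (Suc (Suc n)))"
    by (simp only: smult_add_left smult_1_left)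
  also have "1 + real (Suc (Suc n)) = real (Suc (Suc (Suc n)))"
    by simp
  finally show ?case .
qed

lemma He_Suc_eq: "He (Suc n) = [:0, 1:] * He n - pderiv (He n)"
  by (cases n) (simp_all only: He.simps pderiv_He_Suc, simp_all)

definition half_square :: "real poly" where
  "half_square = [:0, 0, 1/2:]"

lemma poly_half_square [simp]: "poly half_square x = x\<^sup>2 / 2"
  by (simp add: half_square_def power2_eq_square)

lemma pderiv_half_square: "pderiv half_square = [:0, 1:]"
  by (simp add: half_square_def pderiv_pCons)

lemma He_odd_of_even:
  assumes "He (2 * a) = smult (2 ^ a) (pcompose (laguerre_hat a (- 1/2)) half_square)"
  shows "He (2 * a + 1) = smult (2 ^ a) ([:0, 1:] * pcompose (laguerre_hat a (1/2)) half_square)"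
proof -
  let ?P = "laguerre_hat a (- 1/2)"
  have "He (2 * a + 1) = [:0, 1:] * He (2 * a) - pderiv (He (2 * a))"
    using He_Suc_eq[of "2 * a"] by simp
  also have "\<dots> = smult (2 ^ a) ([:0, 1:] * (pcompose ?P half_square - pcompose (pderiv ?P) half_square))"
    unfolding assms
    by (simp add: pderiv_smult pderiv_pcompose pderiv_half_square algebra_simps smult_diff_right)
  also have "pcompose ?P half_square - pcompose (pderiv ?P) half_square
      = pcompose (laguerre_hat a (1/2)) half_square"
    using laguerre_hat_param_plus_1[of a "- 1/2"] by (simp add: pcompose_diff)
  finally show ?thesis .
qed

lemma He_even_of_odd:
  assumes "He (2 * a + 1) = smult (2 ^ a) ([:0, 1:] * pcompose (laguerre_hat a (1/2)) half_square)"
  shows "He (2 * Suc a) = smult (2 ^ Suc a) (pcompose (laguerre_hat (Suc a) (- 1/2)) half_square)"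
proof -
  let ?Q = "laguerre_hat a (1/2)" and ?X = "[:0, 1:] :: real poly"
  have "He (2 * Suc a) = ?X * He (2 * a + 1) - pderiv (He (2 * a + 1))"
    using He_Suc_eq[of "2 * a + 1"] by simp
  also have "\<dots> = smult (2 ^ Suc a) (pcompose (?X * ?Q - smult (1/2) ?Q - ?X * pderiv ?Q) half_square)"
    unfolding assms
    by (rule poly_eq_poly_eq_iff[THEN iffD1], rule ext)
       (simp add: pderiv_smult pderiv_mult pderiv_pcompose pderiv_half_square pderiv_pCons
          poly_pcompose algebra_simps power2_eq_square)
  also have "?X * ?Q - smult (1/2) ?Q - ?X * pderiv ?Q = laguerre_hat (Suc a) (- 1/2)"
    using laguerre_hat_Suc_param_minus_1[of a "1/2"] by simp
  finally show ?thesis .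
qed

lemma He_eq_laguerre_hat:
  "He (2 * a) = smult (2 ^ a) (pcompose (laguerre_hat a (- 1/2)) half_square)"
  "He (2 * a + 1) = smult (2 ^ a) ([:0, 1:] * pcompose (laguerre_hat a (1/2)) half_square)"
proof (induction a)
  case 0
  show "He (2 * 0) = smult (2 ^ 0) (pcompose (laguerre_hat 0 (- 1/2)) half_square)"
    by (simp add: pcompose_1)
  then show "He (2 * 0 + 1) = smult (2 ^ 0) ([:0, 1:] * pcompose (laguerre_hat 0 (1/2)) half_square)"
    by (rule He_odd_of_even)
next
  case (Suc a)
  show even: "He (2 * Suc a) = smult (2 ^ Suc a) (pcompose (laguerre_hat (Suc a) (- 1/2)) half_square)"
    by (rule He_even_of_odd[OF Suc.IH(2)])
  then show "He (2 * Suc a + 1) = smult (2 ^ Suc a) ([:0, 1:] * pcompose (laguerre_hat (Suc a) (1/2)) half_square)"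
    by (rule He_odd_of_even)
qed

lemma poly_He_minus: "poly (He n) (- x) = (-1) ^ n * poly (He n) x"
  by (induction n rule: He.induct) (simp_all add: algebra_simps)

lemma poly_higher_pderiv_He_minus:
  "poly ((pderiv ^^ i) (He n)) (- x) = (-1) ^ (n + i) * poly ((pderiv ^^ i) (He n)) x"
proof (induction i arbitrary: n)
  case 0
  then show ?case by (simp add: poly_He_minus)
next
  case (Suc i)
  show ?case
  proof (cases n)
    case 0
    then show ?thesis by (simp add: higher_pderiv_1 del: funpow.simps)
  next
    case (Suc m)
    have "(pderiv ^^ Suc i) (He n) = smult (real n) ((pderiv ^^ i) (He m))"
      using Suc by (simp add: funpow_Suc_right pderiv_He_Suc higher_pderiv_smult del: funpow.simps He.simps)
    then show ?thesis using Suc.IH Suc by simp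
  qed
qed

subsection \<open>Wronskians of Laguerre functions\<close>

text \<open>The two kinds of columns of \<open>laguerre_pair\<close>: \<open>Inl n\<close> stands for
  \<open>laguerre_hat n a\<close> and \<open>Inr m\<close> for \<open>z powr - a * laguerre_hat m (- a)\<close>.
  The node of a column is its leading exponent in \<open>z\<close>.\<close>
fun lag_fun :: "real \<Rightarrow> nat + nat \<Rightarrow> real \<Rightarrow> real" where
  "lag_fun a (Inl n) = poly (laguerre_hat n a)"
| "lag_fun a (Inr m) = (\<lambda>z. z powr (- a) * poly (laguerre_hat m (- a)) z)"

fun lag_derivs :: "real \<Rightarrow> nat \<Rightarrow> nat + nat \<Rightarrow> real \<Rightarrow> real" where
  "lag_derivs a i (Inl n) z = poly ((pderiv ^^ i) (laguerre_hat n a)) z"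
| "lag_derivs a i (Inr m) z = z powr (- a - real i) * poly (powr_poly_derivs (- a) (laguerre_hat m (- a)) i) z"

fun lag_node :: "real \<Rightarrow> nat + nat \<Rightarrow> real" where
  "lag_node a (Inl n) = real n"
| "lag_node a (Inr m) = real m - a"

lemma derivs_on_pos_lag_fun: "derivs_on_pos (lag_fun a c) (\<lambda>i. lag_derivs a i c)"
  by (cases c) (auto intro: derivs_on_pos_cong_derivs[OF derivs_on_pos_poly]
                  derivs_on_pos_cong_derivs[OF derivs_on_pos_powr_poly])

definition lag_quotient :: "real \<Rightarrow> (nat + nat) list \<Rightarrow> real \<Rightarrow> real" where
  "lag_quotient a cs z = alternant_quotient (\<lambda>i c. lag_derivs a i c z) (lag_node a) cs"

definition laguerre_pair_degs :: "real \<Rightarrow> nat list \<Rightarrow> nat list \<Rightarrow> real \<Rightarrow> real" where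
  "laguerre_pair_degs a ns ms z =
     z powr ((real (length ns) + a) * real (length ms)) * lag_quotient a (map Inl ns @ map Inr ms) z"

lemma length_degvec [simp]: "length (degvec lam) = length lam"
  by (simp add: degvec_def)

lemma wronskian_lag_fun:
  assumes "z > 0"
  shows "wronskian (map (lag_fun a) cs) z = ldet (length cs) (\<lambda>i j. lag_derivs a i (cs ! j) z)"
proof -
  have "wronskian (map (lag_fun a) cs) z
      = ldet (length (map (lag_fun a) cs)) (\<lambda>i j. (map (\<lambda>c i. lag_derivs a i c) cs ! j) i z)"
    by (rule wronskian_eq_ldet) (use assms derivs_on_pos_lag_fun in auto)
  also have "\<dots> = ldet (length cs) (\<lambda>i j. lag_derivs a i (cs ! j) z)"
    unfolding length_map by (intro ldet_cong) (simp del: lag_derivs.simps)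
  finally show ?thesis .
qed

lemma laguerre_pair_eq_degs:
  assumes "z > 0"
  shows "laguerre_pair a mu nu z = laguerre_pair_degs a (degvec mu) (degvec nu) z"
proof -
  let ?cs = "map Inl (degvec mu) @ map Inr (degvec nu)"
  have "map (\<lambda>n. poly (laguerre_hat n a)) (degvec mu)
        @ map (\<lambda>m y. y powr (- a) * poly (laguerre_hat m (- a)) y) (degvec nu) = map (lag_fun a) ?cs"
    by simp
  moreover have "map real (degvec mu) @ map (\<lambda>m. real m - a) (degvec nu) = map (lag_node a) ?cs"
    by simp
  ultimately show ?thesis
    unfolding laguerre_pair_def laguerre_pair_degs_def lag_quotient_def alternant_quotient_def
    by (simp only: wronskian_lag_fun[OF assms]) simp
qed

lemma lag_derivs_Suc_map_Inl:
  assumes "z > 0"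
  shows "lag_derivs a (Suc i) (map_sum Suc id c) z = (lag_node (a + 1) c + 1) * lag_derivs (a + 1) i c z"
proof (cases c)
  case (Inl n)
  then show ?thesis
    by (simp add: funpow_Suc_right pderiv_laguerre_hat_Suc higher_pderiv_smult del: funpow.simps)
next
  case (Inr m)
  have "derivs_on_pos (lag_derivs a 1 (Inr m)) (\<lambda>i. lag_derivs a (Suc i) (Inr m))"
    using derivs_on_pos_Suc[OF derivs_on_pos_lag_fun[of a "Inr m"]] by simp
  moreover have "derivs_on_pos (lag_derivs a 1 (Inr m)) (\<lambda>i y. (real m - a) * lag_derivs (a + 1) i (Inr m) y)"
  proof (rule derivs_on_pos_cong[OF derivs_on_pos_cmult[OF derivs_on_pos_lag_fun[of "a + 1" "Inr m"]]])
    fix y :: real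
    have q: "powr_poly_derivs (- a) (laguerre_hat m (- a)) 1 = smult (real m - a) (laguerre_hat m (- a - 1))"
      using laguerre_hat_Euler[of "- a" m] by simp
    have n: "- (a + 1) = - a - 1" by simp
    show "(real m - a) * lag_fun (a + 1) (Inr m) y = lag_derivs a 1 (Inr m) y"
      by (simp only: lag_fun.simps lag_derivs.simps of_nat_1 q n poly_smult mult_ac)
  qed
  ultimately show ?thesis
    using derivs_on_pos_unique[OF _ _ assms] Inr by (simp del: lag_derivs.simps)
qed

lemma laguerre_pair_degs_Cons_Inl:
  assumes "\<forall>m\<in>set ms. real m \<noteq> a" "z > 0"
  shows "laguerre_pair_degs a (0 # map Suc ns) ms z = laguerre_pair_degs (a + 1) ns ms z"
proof -
  let ?cs = "map Inl ns @ map Inr ms"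
  have cs: "map Inl (0 # map Suc ns) @ map Inr ms = Inl 0 # map (map_sum Suc id) ?cs"
    by simp
  have "lag_quotient a (Inl 0 # map (map_sum Suc id) ?cs) z = lag_quotient (a + 1) ?cs z"
    unfolding lag_quotient_def
  proof (rule alternant_quotient_Cons_unit[where c = 1])
    fix c i
    assume "c \<in> set ?cs"
    then show "lag_node a (map_sum Suc id c) \<noteq> lag_node a (Inl 0)"
      using assms(1) by auto
    show "lag_derivs a (Suc i) (map_sum Suc id c) z
        = (lag_node a (map_sum Suc id c) - lag_node a (Inl 0)) * lag_derivs (a + 1) i c z"
      by (subst lag_derivs_Suc_map_Inl[OF assms(2)]) (cases c; simp)
    show "lag_node a (map_sum Suc id c) = lag_node (a + 1) c + 1"
      by (cases c) simp_all
  qed (simp_all add: higher_pderiv_1)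
  then show ?thesis unfolding laguerre_pair_degs_def cs by (simp add: algebra_simps)
qed

definition powr_derivs :: "real \<Rightarrow> nat \<Rightarrow> real \<Rightarrow> real" where
  "powr_derivs b i z = z powr (b - real i) * poly (powr_poly_derivs b 1 i) z"

lemma derivs_on_pos_powr: "derivs_on_pos (\<lambda>z. z powr b) (powr_derivs b)"
  using derivs_on_pos_powr_poly[of b 1] unfolding powr_derivs_def by simp

text \<open>Multiplying all columns by \<open>z powr a\<close> turns the column \<open>Inr 0\<close> into the constant
  \<open>1\<close>, so that it can be expanded away like \<open>Inl 0\<close>.\<close>
fun lag_fun_conj :: "real \<Rightarrow> nat + nat \<Rightarrow> real \<Rightarrow> real" where
  "lag_fun_conj a (Inl n) = (\<lambda>z. z powr a * poly (laguerre_hat n a) z)"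
| "lag_fun_conj a (Inr m) = poly (laguerre_hat m (- a))"

fun lag_conj_derivs :: "real \<Rightarrow> nat \<Rightarrow> nat + nat \<Rightarrow> real \<Rightarrow> real" where
  "lag_conj_derivs a i (Inl n) z = z powr (a - real i) * poly (powr_poly_derivs a (laguerre_hat n a) i) z"
| "lag_conj_derivs a i (Inr m) z = poly ((pderiv ^^ i) (laguerre_hat m (- a))) z"

lemma derivs_on_pos_lag_fun_conj: "derivs_on_pos (lag_fun_conj a c) (\<lambda>i. lag_conj_derivs a i c)"
  by (cases c) (auto intro: derivs_on_pos_cong_derivs[OF derivs_on_pos_poly]
                  derivs_on_pos_cong_derivs[OF derivs_on_pos_powr_poly])

lemma lag_derivs_eq_conj:
  assumes "z > 0"
  shows "lag_derivs a i c z = (\<Sum>l\<le>i. of_nat (i choose l) * lag_conj_derivs a l c z * powr_derivs (- a) (i - l) z)"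
proof -
  have "lag_fun a c y = lag_fun_conj a c y * y powr (- a)" if "y > 0" for y
    using that by (cases c) (simp_all add: powr_minus field_simps)
  then have "derivs_on_pos (lag_fun a c)
      (\<lambda>i y. \<Sum>l\<le>i. of_nat (i choose l) * lag_conj_derivs a l c y * powr_derivs (- a) (i - l) y)"
    by (intro derivs_on_pos_cong[OF derivs_on_pos_mult[OF derivs_on_pos_lag_fun_conj derivs_on_pos_powr]])
      simp
  then show ?thesis using derivs_on_pos_unique[OF derivs_on_pos_lag_fun _ assms] by simp
qed

lemma ldet_lag_derivs_eq_conj:
  assumes "z > 0"
  shows "ldet n (\<lambda>i j. lag_derivs a i (cs ! j) z)
       = (z powr (- a)) ^ n * ldet n (\<lambda>i j. lag_conj_derivs a i (cs ! j) z)"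
  using ldet_binomial_convolution[of n "\<lambda>j l. lag_conj_derivs a l (cs ! j) z" "\<lambda>k. powr_derivs (- a) k z"]
  by (simp add: lag_derivs_eq_conj[OF assms] powr_derivs_def del: lag_derivs.simps lag_conj_derivs.simps)

lemma lag_conj_derivs_Suc_map_Inr:
  assumes "z > 0"
  shows "lag_conj_derivs a (Suc i) (map_sum id Suc c) z
       = (lag_node (a - 1) c + a)
         * (\<Sum>l\<le>i. of_nat (i choose l) * lag_derivs (a - 1) l c z * powr_derivs (a - 1) (i - l) z)"
proof -
  have "derivs_on_pos (lag_conj_derivs a 1 (map_sum id Suc c)) (\<lambda>i. lag_conj_derivs a (Suc i) (map_sum id Suc c))"
    using derivs_on_pos_Suc[OF derivs_on_pos_lag_fun_conj[of a "map_sum id Suc c"]] by simp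
  moreover have "derivs_on_pos (lag_conj_derivs a 1 (map_sum id Suc c))
      (\<lambda>i y. (lag_node (a - 1) c + a)
         * (\<Sum>l\<le>i. of_nat (i choose l) * lag_derivs (a - 1) l c y * powr_derivs (a - 1) (i - l) y))"
  proof (rule derivs_on_pos_cong[OF derivs_on_pos_cmult[OF derivs_on_pos_mult[OF
          derivs_on_pos_lag_fun[of "a - 1" c] derivs_on_pos_powr[of "a - 1"]]]])
    fix y :: real
    assume y: "y > 0"
    show "(lag_node (a - 1) c + a) * (lag_fun (a - 1) c y * y powr (a - 1))
        = lag_conj_derivs a 1 (map_sum id Suc c) y"
    proof (cases c)
      case (Inl n)
      have "powr_poly_derivs a (laguerre_hat n a) 1 = smult (real n + a) (laguerre_hat n (a - 1))"
        using laguerre_hat_Euler[of a n] by simp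
      then show ?thesis using Inl by (simp add: algebra_simps)
    next
      case (Inr m)
      have cancel: "y powr (1 - a) * (y powr (a - 1) * t) = t" for t
        using y by (simp add: powr_add[symmetric] mult.assoc[symmetric])
      show ?thesis
        using Inr by (simp add: pderiv_laguerre_hat_Suc algebra_simps cancel)
    qed
  qed
  ultimately show ?thesis
    using derivs_on_pos_unique[OF _ _ assms] by (simp del: lag_derivs.simps lag_conj_derivs.simps)
qed

lemma laguerre_pair_degs_Cons_Inr:
  assumes "\<forall>n\<in>set ns. real n + a \<noteq> 0" "z > 0"
  shows "laguerre_pair_degs a ns (0 # map Suc ms) z = laguerre_pair_degs (a - 1) ns ms z"
proof -
  let ?cs = "map Inl ns @ map Inr ms"
  let ?N = "length ?cs"
  let ?E = "\<lambda>i c. \<Sum>l\<le>i. of_nat (i choose l) * lag_derivs (a - 1) l c z * powr_derivs (a - 1) (i - l) z"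
  have "lag_quotient a (map Inl ns @ map Inr (0 # map Suc ms)) z
      = lag_quotient a (Inr 0 # map (map_sum id Suc) ?cs) z"
    unfolding lag_quotient_def by (rule alternant_quotient_mset_eq) (simp add: comp_def)
  also have "\<dots> = (z powr (- a)) ^ Suc ?N
      * alternant_quotient (\<lambda>i c. lag_conj_derivs a i c z) (lag_node a) (Inr 0 # map (map_sum id Suc) ?cs)"
    unfolding lag_quotient_def alternant_quotient_def
    by (simp only: ldet_lag_derivs_eq_conj[OF assms(2)] length_Cons length_map) simp
  also have "alternant_quotient (\<lambda>i c. lag_conj_derivs a i c z) (lag_node a) (Inr 0 # map (map_sum id Suc) ?cs)
      = alternant_quotient ?E (lag_node (a - 1)) ?cs"
  proof (rule alternant_quotient_Cons_unit[where c = 0])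
    fix c i
    assume "c \<in> set ?cs"
    then show "lag_node a (map_sum id Suc c) \<noteq> lag_node a (Inr 0)"
      using assms(1) by auto
    show "lag_conj_derivs a (Suc i) (map_sum id Suc c) z
        = (lag_node a (map_sum id Suc c) - lag_node a (Inr 0)) * ?E i c"
      by (subst lag_conj_derivs_Suc_map_Inr[OF assms(2)]) (cases c; simp)
    show "lag_node a (map_sum id Suc c) = lag_node (a - 1) c + 0"
      by (cases c) simp_all
  qed (simp_all add: higher_pderiv_1)
  also have "\<dots> = (z powr (a - 1)) ^ ?N * lag_quotient (a - 1) ?cs z"
    unfolding alternant_quotient_def lag_quotient_def
    using ldet_binomial_convolution[of ?N "\<lambda>j l. lag_derivs (a - 1) l (?cs ! j) z" "\<lambda>k. powr_derivs (a - 1) k z"]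
    by (simp add: powr_derivs_def del: lag_derivs.simps)
  finally have quot: "lag_quotient a (map Inl ns @ map Inr (0 # map Suc ms)) z
      = (z powr (- a)) ^ Suc ?N * (z powr (a - 1)) ^ ?N * lag_quotient (a - 1) ?cs z"
    by simp
  have "z powr ((real (length ns) + a) * real (Suc (length ms))) * (z powr (- a)) ^ Suc ?N * (z powr (a - 1)) ^ ?N
      = z powr ((real (length ns) + a) * real (Suc (length ms)) + real (Suc ?N) * (- a) + real ?N * (a - 1))"
    using assms(2) by (simp only: powr_power powr_add less_numeral_extra(3) not_less_iff_gr_or_eq)
  also have "(real (length ns) + a) * real (Suc (length ms)) + real (Suc ?N) * (- a) + real ?N * (a - 1)
      = (real (length ns) + (a - 1)) * real (length ms)"
    by (simp add: algebra_simps)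
  finally show ?thesis
    unfolding laguerre_pair_degs_def quot by (simp add: mult.assoc[symmetric])
qed

lemma not_Ints_add_of_nat: "a \<notin> \<int> \<Longrightarrow> a + real n \<notin> \<int>"
  by (metis Ints_diff Ints_of_nat add_diff_cancel_right')

lemma not_Ints_diff_of_nat: "a \<notin> \<int> \<Longrightarrow> a - real n \<notin> \<int>"
  by (metis Ints_add Ints_of_nat diff_add_cancel)

lemma laguerre_pair_degs_shift_Inl:
  assumes "a \<notin> \<int>" "z > 0"
  shows "laguerre_pair_degs a ([0..<s] @ map (\<lambda>n. n + s) ns) ms z = laguerre_pair_degs (a + real s) ns ms z"
  using assms(1)
proof (induction s arbitrary: a)
  case (Suc s)
  have shift: "[0..<Suc s] @ map (\<lambda>n. n + Suc s) ns = 0 # map Suc ([0..<s] @ map (\<lambda>n. n + s) ns)"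
    by (simp add: upt_conv_Cons map_Suc_upt del: upt_Suc)
  have nodes: "\<forall>m\<in>set ms. real m \<noteq> a"
    using Suc.prems by auto
  have "a + 1 \<notin> \<int>"
    using not_Ints_add_of_nat[OF Suc.prems, of 1] by simp
  then show ?case
    unfolding shift laguerre_pair_degs_Cons_Inl[OF nodes assms(2)] by (simp add: Suc.IH algebra_simps)
qed simp

lemma laguerre_pair_degs_shift_Inr:
  assumes "a \<notin> \<int>" "z > 0"
  shows "laguerre_pair_degs a ns ([0..<s] @ map (\<lambda>n. n + s) ms) z = laguerre_pair_degs (a - real s) ns ms z"
  using assms(1)
proof (induction s arbitrary: a)
  case (Suc s)
  have shift: "[0..<Suc s] @ map (\<lambda>n. n + Suc s) ms = 0 # map Suc ([0..<s] @ map (\<lambda>n. n + s) ms)"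
    by (simp add: upt_conv_Cons map_Suc_upt del: upt_Suc)
  have nodes: "\<forall>n\<in>set ns. real n + a \<noteq> 0"
    using Suc.prems by (auto simp: add_eq_0_iff)
  have "a - 1 \<notin> \<int>"
    using not_Ints_diff_of_nat[OF Suc.prems, of 1] by simp
  then show ?case
    unfolding shift laguerre_pair_degs_Cons_Inr[OF nodes assms(2)] by (simp add: Suc.IH algebra_simps)
qed simp

subsection \<open>Wronskians of Hermite polynomials\<close>

definition hermite_quotient :: "nat list \<Rightarrow> real \<Rightarrow> real" where
  "hermite_quotient ns x = alternant_quotient (\<lambda>i n. poly ((pderiv ^^ i) (He n)) x) real ns"

lemma poly_ldet: "poly (ldet n A) x = ldet n (\<lambda>i j. poly (A i j) x)"
  unfolding ldet_def by (simp add: poly_sum poly_prod of_int_poly)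

lemma poly_He_part: "poly (He_part lam) x = hermite_quotient (degvec lam) x"
proof -
  have "ldet (length lam) (\<lambda>i j. poly ((pderiv ^^ i) (map He (degvec lam) ! j)) x)
      = ldet (length lam) (\<lambda>i j. poly ((pderiv ^^ i) (He (degvec lam ! j))) x)"
    by (rule ldet_cong) simp
  then show ?thesis
    unfolding He_part_def poly_wronskian_def hermite_quotient_def alternant_quotient_def
    by (simp add: poly_ldet)
qed

lemma hermite_quotient_shift:
  "hermite_quotient ([0..<t] @ map (\<lambda>d. d + t) ns) x = hermite_quotient ns x"
proof (induction t)
  case (Suc t)
  have shift: "[0..<Suc t] @ map (\<lambda>d. d + Suc t) ns = 0 # map Suc ([0..<t] @ map (\<lambda>d. d + t) ns)"
    by (simp add: upt_conv_Cons map_Suc_upt del: upt_Suc)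
  have Cons_0: "hermite_quotient (0 # map Suc ms) x = hermite_quotient ms x" for ms
    unfolding hermite_quotient_def
    by (rule alternant_quotient_Cons_unit[where c = 1])
       (simp_all add: higher_pderiv_1 funpow_Suc_right pderiv_He_Suc higher_pderiv_smult
          del: funpow.simps)
  show ?case unfolding shift Cons_0 Suc.IH ..
qed simp

lemma hermite_quotient_minus:
  "hermite_quotient ns (- x) = (-1) ^ (sum_list ns + length ns * (length ns - 1) div 2) * hermite_quotient ns x"
proof -
  let ?N = "length ns"
  have "ldet ?N (\<lambda>i j. poly ((pderiv ^^ i) (He (ns ! j))) (- x))
      = ldet ?N (\<lambda>i j. (-1) ^ i * ((-1) ^ (ns ! j) * poly ((pderiv ^^ i) (He (ns ! j))) x))"
    by (intro ldet_cong) (simp add: poly_higher_pderiv_He_minus power_add)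
  also have "\<dots> = (\<Prod>i<?N. (-1) ^ i) * (\<Prod>j<?N. (-1) ^ (ns ! j))
      * ldet ?N (\<lambda>i j. poly ((pderiv ^^ i) (He (ns ! j))) x)"
    by (simp add: ldet_scale_rows ldet_scale_cols)
  also have "(\<Prod>i<?N. (-1::real) ^ i) = (-1) ^ (?N * (?N - 1) div 2)"
    by (simp add: power_sum[symmetric] sum_lessThan_id)
  also have "(\<Prod>j<?N. (-1::real) ^ (ns ! j)) = (-1) ^ sum_list ns"
    by (simp add: power_sum[symmetric] sum_list_sum_nth atLeast0LessThan)
  finally show ?thesis
    unfolding hermite_quotient_def alternant_quotient_def by (simp add: power_add)
qed

text \<open>\<open>Inl a\<close> and \<open>Inr b\<close> stand for the even and odd Hermite polynomials
  \<open>He (2 * a)\<close> and \<open>He (2 * b + 1)\<close>; by \<open>He_eq_laguerre_hat\<close> these are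
  \<open>He_scale\<close> times the Laguerre columns \<open>lag_fun (- 1/2)\<close> evaluated at \<open>x\<^sup>2 / 2\<close>.\<close>
fun interleave :: "nat + nat \<Rightarrow> nat" where
  "interleave (Inl a) = 2 * a"
| "interleave (Inr b) = 2 * b + 1"

fun He_scale :: "nat + nat \<Rightarrow> real" where
  "He_scale (Inl a) = 2 ^ a"
| "He_scale (Inr b) = 2 ^ b * sqrt 2"

lemma poly_He_interleave:
  assumes "x > 0"
  shows "poly (He (interleave c)) x = He_scale c * lag_fun (- 1/2) c (x\<^sup>2 / 2)"
proof (cases c)
  case (Inl a)
  then show ?thesis using He_eq_laguerre_hat(1)[of a] by (simp add: poly_pcompose)
next
  case (Inr b)
  have "(x\<^sup>2 / 2) powr (1/2) = x / sqrt 2"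
    using assms by (simp add: powr_half_sqrt real_sqrt_divide)
  then show ?thesis using He_eq_laguerre_hat(2)[of b] Inr by (simp add: poly_pcompose)
qed

lemma poly_higher_pderiv_He_interleave:
  assumes "x > 0"
  shows "poly ((pderiv ^^ i) (He (interleave c))) x
       = (\<Sum>l\<le>i. poly (chain_coeff i l) x * (He_scale c * lag_derivs (- 1/2) l c (x\<^sup>2 / 2)))"
proof -
  have "derivs_on_pos (\<lambda>x. He_scale c * lag_fun (- 1/2) c (x\<^sup>2 / 2))
      (\<lambda>i x. He_scale c * (\<Sum>l\<le>i. poly (chain_coeff i l) x * lag_derivs (- 1/2) l c (x\<^sup>2 / 2)))"
    by (rule derivs_on_pos_cmult[OF derivs_on_pos_half_square[OF derivs_on_pos_lag_fun]])
  then have "derivs_on_pos (poly (He (interleave c)))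
      (\<lambda>i x. \<Sum>l\<le>i. poly (chain_coeff i l) x * (He_scale c * lag_derivs (- 1/2) l c (x\<^sup>2 / 2)))"
    by (rule derivs_on_pos_cong_derivs[THEN derivs_on_pos_cong])
       (simp_all add: sum_distrib_left mult_ac poly_He_interleave del: lag_derivs.simps)
  then show ?thesis using derivs_on_pos_unique[OF derivs_on_pos_poly _ assms] by simp
qed

lemma hermite_quotient_interleave:
  fixes cs :: "(nat + nat) list"
  assumes "x > 0"
  defines "P \<equiv> length cs * (length cs - 1) div 2"
  shows "hermite_quotient (map interleave cs) x
       = x ^ P * (\<Prod>j<length cs. He_scale (cs ! j)) / 2 ^ P * lag_quotient (- 1/2) cs (x\<^sup>2 / 2)"
proof -
  let ?N = "length cs"
  have "ldet ?N (\<lambda>i j. poly ((pderiv ^^ i) (He (map interleave cs ! j))) x)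
      = ldet ?N (\<lambda>i j. \<Sum>l\<le>i. poly (chain_coeff i l) x * (He_scale (cs ! j) * lag_derivs (- 1/2) l (cs ! j) (x\<^sup>2 / 2)))"
    by (intro ldet_cong) (simp add: poly_higher_pderiv_He_interleave[OF assms(1)] del: lag_derivs.simps)
  also have "\<dots> = x ^ P * ((\<Prod>j<?N. He_scale (cs ! j)) * ldet ?N (\<lambda>i j. lag_derivs (- 1/2) i (cs ! j) (x\<^sup>2 / 2)))"
    unfolding ldet_chain_coeff P_def by (simp add: ldet_scale_cols)
  finally have L: "ldet ?N (\<lambda>i j. poly ((pderiv ^^ i) (He (map interleave cs ! j))) x)
      = x ^ P * ((\<Prod>j<?N. He_scale (cs ! j)) * ldet ?N (\<lambda>i j. lag_derivs (- 1/2) i (cs ! j) (x\<^sup>2 / 2)))" .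
  have "real (interleave c) = 2 * lag_node (- 1/2) c" for c
    by (cases c) simp_all
  then have "map real (map interleave cs) = map (\<lambda>y. 2 * y) (map (lag_node (- 1/2)) cs)"
    by simp
  then have V: "vandermonde (map real (map interleave cs)) = 2 ^ P * vandermonde (map (lag_node (- 1/2)) cs)"
    by (simp only: vandermonde_scale length_map P_def)
  show ?thesis
    unfolding hermite_quotient_def lag_quotient_def alternant_quotient_def length_map L V by simp
qed

subsection \<open>Maya diagrams\<close>

abbreviation maya_of_set :: "nat set \<Rightarrow> int set" where
  "maya_of_set D \<equiv> {n. n < 0} \<union> int ` D"

lemma sorted_list_of_set_eqI:
  fixes A :: "'a::linorder set"
  assumes "finite A" "sorted_wrt (<) l" "set l = A"
  shows "sorted_list_of_set A = l"
proof -
  have "distinct l" using assms(2) strict_sorted_iff by blast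
  then have "length l = card A" using assms(3) distinct_card by fastforce
  then show ?thesis using sorted_list_of_set_unique[of A l] assms by simp
qed

lemma card_below_nth:
  fixes xs :: "nat list"
  assumes "sorted_wrt (<) xs" "j < length xs"
  shows "card {x \<in> set xs. x < xs ! j} = j"
proof -
  have "{x \<in> set xs. x < xs ! j} = set (take j xs)"
  proof (rule equalityI; rule subsetI)
    fix x assume "x \<in> {x \<in> set xs. x < xs ! j}"
    then obtain i where i: "i < length xs" "x = xs ! i" "xs ! i < xs ! j" by (auto simp: in_set_conv_nth)
    have "i < j"
    proof (rule ccontr)
      assume "\<not> i < j"
      then have "j \<le> i" by simp
      then have "xs ! j \<le> xs ! i"
        using sorted_wrt_nth_less[OF assms(1), of j i] i(1) by (cases "j = i") auto
      then show False using i(3) by simp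
    qed
    then show "x \<in> set (take j xs)" using i by (auto simp: in_set_conv_nth)
  next
    fix x assume "x \<in> set (take j xs)"
    then obtain i where i: "i < j" "x = xs ! i" using assms(2) by (auto simp: in_set_conv_nth)
    then show "x \<in> {x \<in> set xs. x < xs ! j}"
      using assms sorted_wrt_nth_less[OF assms(1) i(1) assms(2)] by auto
  qed
  moreover have "distinct (take j xs)" using assms(1) strict_sorted_iff distinct_take by blast
  ultimately show ?thesis using assms(2) by (simp add: distinct_card)
qed

lemma sorted_wrt_less_nth_add_le:
  fixes xs :: "nat list"
  assumes "sorted_wrt (<) xs" "i \<le> j" "j < length xs"
  shows "xs ! i + (j - i) \<le> xs ! j"
  using assms(2,3)
proof (induction j)
  case (Suc j)
  show ?case
  proof (cases "i = Suc j")
    case False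
    then have "xs ! i + (j - i) \<le> xs ! j" using Suc by simp
    moreover have "xs ! j < xs ! Suc j" using sorted_wrt_nth_less[OF assms(1)] Suc.prems by simp
    ultimately show ?thesis using False Suc.prems by simp
  qed simp
qed simp

context
  fixes D :: "nat set"
  assumes finite_D: "finite D"
begin

definition first_gap :: nat where
  "first_gap = (LEAST n. n \<notin> D)"

definition upper_part :: "nat set" where
  "upper_part = {d \<in> D. first_gap < d}"

definition upper_list :: "nat list" where
  "upper_list = sorted_list_of_set upper_part"

lemma first_gap_notin: "first_gap \<notin> D"
proof -
  have "\<exists>n. n \<notin> D" using finite_D by (meson ex_new_if_finite infinite_UNIV_nat)
  then show ?thesis unfolding first_gap_def by (rule LeastI_ex)
qed

lemma less_first_gap_in: "n < first_gap \<Longrightarrow> n \<in> D"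
  unfolding first_gap_def using not_less_Least by blast

lemma split_at_first_gap: "D = {0..<first_gap} \<union> upper_part"
  using less_first_gap_in first_gap_notin unfolding upper_part_def
  by (auto simp: not_less) (metis le_neq_implies_less)

lemma finite_upper_part: "finite upper_part"
  unfolding upper_part_def using finite_D by simp

lemma sorted_upper_list: "sorted_wrt (<) upper_list"
  unfolding upper_list_def using finite_upper_part strict_sorted_list_of_set by auto

lemma set_upper_list: "set upper_list = upper_part"
  unfolding upper_list_def using finite_upper_part by simp

lemma first_gap_less_upper_list: "j < length upper_list \<Longrightarrow> first_gap < upper_list ! j"
  using set_upper_list nth_mem unfolding upper_part_def by fastforce

lemma maya_count_neg: "m < 0 \<Longrightarrow> maya_count (maya_of_set D) m = 0"
  unfolding maya_count_def by (simp add: card_eq_0_iff) (auto intro!: finite_subset[of _ "{}"])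

lemma maya_count_of_nat: "maya_count (maya_of_set D) (int d) = card ({0..<d} - D)"
proof -
  have "{n. n \<notin> maya_of_set D \<and> n < int d} = int ` ({0..<d} - D)"
  proof (intro equalityI subsetI)
    fix n
    assume "n \<in> {n. n \<notin> maya_of_set D \<and> n < int d}"
    then have "n \<ge> 0" "nat n \<notin> D" "nat n < d"
      by (auto simp: image_iff)
    then show "n \<in> int ` ({0..<d} - D)" by (auto intro!: image_eqI[of _ _ "nat n"])
  qed auto
  then show ?thesis unfolding maya_count_def by (simp add: card_image)
qed

lemma card_gaps_below_pos_iff: "d \<in> D \<Longrightarrow> 0 < card ({0..<d} - D) \<longleftrightarrow> first_gap < d"
proof
  assume d: "d \<in> D" "0 < card ({0..<d} - D)"
  show "first_gap < d"
  proof (rule ccontr)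
    assume "\<not> first_gap < d"
    then have "{0..<d} - D = {}" using less_first_gap_in by auto
    then show False using d(2) by (metis card.empty less_irrefl)
  qed
next
  assume "d \<in> D" "first_gap < d"
  then have "first_gap \<in> {0..<d} - D" using first_gap_notin by auto
  then show "0 < card ({0..<d} - D)" by (auto simp: card_gt_0_iff)
qed

lemma maya_count_pos_set: "{m \<in> maya_of_set D. 0 < maya_count (maya_of_set D) m} = int ` upper_part"
proof (intro equalityI subsetI)
  fix m
  assume m: "m \<in> {m \<in> maya_of_set D. 0 < maya_count (maya_of_set D) m}"
  then have "m \<ge> 0" using maya_count_neg by fastforce
  then obtain d where "m = int d" "d \<in> D" using m by auto
  then show "m \<in> int ` upper_part"
    using m card_gaps_below_pos_iff[of d] unfolding upper_part_def by (auto simp: maya_count_of_nat)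
next
  fix m
  assume "m \<in> int ` upper_part"
  then obtain d where "m = int d" "d \<in> D" "first_gap < d" unfolding upper_part_def by auto
  then show "m \<in> {m \<in> maya_of_set D. 0 < maya_count (maya_of_set D) m}"
    using card_gaps_below_pos_iff[of d] by (auto simp: maya_count_of_nat)
qed

lemma card_gaps_below_upper_part:
  assumes "d \<in> upper_part"
  shows "card ({0..<d} - D) = d - first_gap - card {e \<in> upper_part. e < d}"
proof -
  have "first_gap < d" using assms unfolding upper_part_def by auto
  then have "{0..<d} \<inter> D = {0..<first_gap} \<union> {e \<in> upper_part. e < d}"
    using split_at_first_gap by (auto simp: upper_part_def)
  moreover have "{0..<first_gap} \<inter> {e \<in> upper_part. e < d} = {}"
    unfolding upper_part_def by auto
  ultimately have "card ({0..<d} \<inter> D) = first_gap + card {e \<in> upper_part. e < d}"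
    using finite_upper_part by (simp add: card_Un_disjoint)
  moreover have "card ({0..<d} - D) = d - card ({0..<d} \<inter> D)"
    by (metis card_Diff_subset_Int card_atLeastLessThan diff_zero finite_Int finite_atLeastLessThan)
  ultimately show ?thesis by simp
qed

lemma card_gaps_below_upper_list:
  assumes "j < length upper_list"
  shows "card ({0..<upper_list ! j} - D) = upper_list ! j - first_gap - j"
proof -
  have "upper_list ! j \<in> upper_part" using assms set_upper_list nth_mem by blast
  moreover have "{e \<in> upper_part. e < upper_list ! j} = {x \<in> set upper_list. x < upper_list ! j}"
    using set_upper_list by simp
  ultimately show ?thesis
    using card_gaps_below_upper_part card_below_nth[OF sorted_upper_list assms] by simp
qed

lemma partition_of_maya_eq:
  "partition_of_maya (maya_of_set D) = rev (map (\<lambda>j. upper_list ! j - first_gap - j) [0..<length upper_list])"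
    (is "_ = rev ?parts")
proof -
  have sorted_list: "sorted_list_of_set (int ` upper_part) = map int upper_list"
    using finite_upper_part sorted_upper_list set_upper_list
    by (intro sorted_list_of_set_eqI) (simp_all add: sorted_wrt_map)
  have counts: "map (maya_count (maya_of_set D)) (map int upper_list) = ?parts"
    by (rule nth_equalityI) (simp_all add: maya_count_of_nat card_gaps_below_upper_list)
  have "sorted ?parts"
  proof (rule sorted_iff_nth_mono[THEN iffD2], intro allI impI)
    fix i j
    assume ij: "i \<le> j" "j < length ?parts"
    then have "upper_list ! i + (j - i) \<le> upper_list ! j" "first_gap < upper_list ! i"
      using sorted_wrt_less_nth_add_le[OF sorted_upper_list] first_gap_less_upper_list by auto
    then show "?parts ! i \<le> ?parts ! j"
      using ij by simp
  qed
  then show ?thesis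
    unfolding partition_of_maya_def maya_count_pos_set sorted_list counts by (simp add: sorted_sort_id)
qed

lemma degvec_partition_of_maya:
  "degvec (partition_of_maya (maya_of_set D)) = rev (map (\<lambda>d. d - first_gap) upper_list)"
proof (rule nth_equalityI)
  let ?L = "length upper_list"
  fix i
  assume "i < length (degvec (partition_of_maya (maya_of_set D)))"
  then have i: "i < ?L" by (simp add: partition_of_maya_eq degvec_def)
  define k where "k = ?L - 1 - i"
  have k: "k < ?L" "k + i = ?L - 1" using i unfolding k_def by auto
  have "upper_list ! 0 + k \<le> upper_list ! k"
    using sorted_wrt_less_nth_add_le[OF sorted_upper_list, of 0 k] k by simp
  moreover have "first_gap < upper_list ! 0" using first_gap_less_upper_list[of 0] k by linarith
  ultimately show "degvec (partition_of_maya (maya_of_set D)) ! i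
      = rev (map (\<lambda>d. d - first_gap) upper_list) ! i"
    using i k by (simp add: partition_of_maya_eq degvec_def rev_nth k_def)
qed (simp add: partition_of_maya_eq degvec_def)

text \<open>The Maya diagram of \<open>D\<close> is that of its partition shifted by \<open>first_gap\<close>.\<close>
lemma mset_degvec_partition_of_maya:
  "mset ([0..<first_gap] @ map (\<lambda>d. d + first_gap) (degvec (partition_of_maya (maya_of_set D))))
     = mset_set D"
proof -
  have "map (\<lambda>d. d + first_gap) (map (\<lambda>d. d - first_gap) upper_list) = upper_list"
    using first_gap_less_upper_list by (intro nth_equalityI) (auto simp: less_imp_le)
  then have "mset ([0..<first_gap] @ map (\<lambda>d. d + first_gap) (degvec (partition_of_maya (maya_of_set D))))
      = mset ([0..<first_gap] @ upper_list)"
    unfolding degvec_partition_of_maya by (simp add: rev_map[symmetric] del: map_map)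
  also have "\<dots> = mset_set D"
  proof -
    have "set ([0..<first_gap] @ upper_list) = D"
      using split_at_first_gap set_upper_list by auto
    moreover have "distinct ([0..<first_gap] @ upper_list)"
      using sorted_upper_list set_upper_list strict_sorted_iff by (auto simp: upper_part_def)
    ultimately show ?thesis by (metis mset_set_set)
  qed
  finally show ?thesis .
qed

end

lemma maya_shift_maya_of_set:
  "maya_shift (maya_of_set (set L)) (int s) = maya_of_set (set ([0..<s] @ map (\<lambda>n. n + s) L))"
proof (intro equalityI subsetI)
  fix m assume "m \<in> maya_shift (maya_of_set (set L)) (int s)"
  then obtain n where m: "m = n + int s" "n < 0 \<or> n \<in> int ` set L"
    unfolding maya_shift_def by auto
  then consider "n < 0" | x where "x \<in> set L" "m = int (x + s)"
    by auto
  then show "m \<in> maya_of_set (set ([0..<s] @ map (\<lambda>n. n + s) L))"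
  proof cases
    case 1
    then show ?thesis using m by (cases "m < 0") (auto intro!: image_eqI[of _ _ "nat m"])
  next
    case (2 x)
    then have "x + s \<in> set ([0..<s] @ map (\<lambda>n. n + s) L)" by simp
    with 2 show ?thesis by blast
  qed
next
  fix m assume "m \<in> maya_of_set (set ([0..<s] @ map (\<lambda>n. n + s) L))"
  then have "m - int s \<in> maya_of_set (set L)" by auto
  then show "m \<in> maya_shift (maya_of_set (set L)) (int s)"
    unfolding maya_shift_def by (auto intro!: image_eqI[of _ _ "m - int s"])
qed

lemma interleave_maya_of_set:
  "(\<lambda>m. 2 * m) ` maya_of_set A \<union> (\<lambda>m. 2 * m + 1) ` maya_of_set B
   = maya_of_set ((\<lambda>a. 2 * a) ` A \<union> (\<lambda>b. 2 * b + 1) ` B)"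
proof (intro equalityI subsetI)
  fix x assume x: "x \<in> maya_of_set ((\<lambda>a. 2 * a) ` A \<union> (\<lambda>b. 2 * b + 1) ` B)"
  have "x = 2 * (x div 2) \<or> x = 2 * (x div 2) + 1" by presburger
  then show "x \<in> (\<lambda>m. 2 * m) ` maya_of_set A \<union> (\<lambda>m. 2 * m + 1) ` maya_of_set B"
  proof
    assume "x = 2 * (x div 2)"
    then show ?thesis using x by (auto simp: image_iff)
  next
    assume "x = 2 * (x div 2) + 1"
    then show ?thesis using x by (auto simp: image_iff)
  qed
next
  fix x assume "x \<in> (\<lambda>m. 2 * m) ` maya_of_set A \<union> (\<lambda>m. 2 * m + 1) ` maya_of_set B"
  then consider (even) m where "x = 2 * m" "m \<in> maya_of_set A"
    | (odd) m where "x = 2 * m + 1" "m \<in> maya_of_set B"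
    by blast
  then show "x \<in> maya_of_set ((\<lambda>a. 2 * a) ` A \<union> (\<lambda>b. 2 * b + 1) ` B)"
  proof cases
    case even
    show ?thesis
    proof (cases "m < 0")
      case False
      then obtain a where "a \<in> A" "x = int (2 * a)" using even by auto
      then show ?thesis by blast
    qed (use even in auto)
  next
    case odd
    show ?thesis
    proof (cases "m < 0")
      case False
      then obtain b where "b \<in> B" "x = int (2 * b + 1)" using odd by auto
      then show ?thesis by blast
    qed (use odd in auto)
  qed
qed

text \<open>The non-negative part of the Maya diagram \<open>maya lam\<close> shifted by \<open>s\<close>.\<close>
definition shifted_degvec :: "nat \<Rightarrow> nat list \<Rightarrow> nat list" where
  "shifted_degvec s lam = [0..<s] @ map (\<lambda>n. n + s) (degvec lam)"

lemma maya_shift_maya: "maya_shift (maya lam) (int s) = maya_of_set (set (shifted_degvec s lam))"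
  unfolding maya_def shifted_degvec_def by (rule maya_shift_maya_of_set)

lemma set_map_interleave:
  "set (map interleave (map Inl as @ map Inr bs)) = (\<lambda>a. 2 * a) ` set as \<union> (\<lambda>b. 2 * b + 1) ` set bs"
  by (auto simp: image_iff)

lemma Phi_eq_partition_of_maya_interleave:
  fixes k :: nat
  obtains s s' where "s' + length nu = s + length mu + k"
    and "Phi mu nu (int k) = partition_of_maya (maya_of_set (set (map interleave
           (map Inl (shifted_degvec s mu) @ map Inr (shifted_degvec s' nu)))))"
proof -
  define d where "d = int k + int (length mu) - int (length nu)"
  have s: "(if d \<ge> 0 then 0 else - d) = int (nat (- d))" and s': "(if d \<ge> 0 then d else 0) = int (nat d)"
    by simp_all
  have "nat d + length nu = nat (- d) + length mu + k"
    unfolding d_def by linarith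
  moreover have "Phi mu nu (int k) = partition_of_maya (maya_of_set (set (map interleave
      (map Inl (shifted_degvec (nat (- d)) mu) @ map Inr (shifted_degvec (nat d) nu)))))"
    unfolding Phi_def Let_def d_def[symmetric] s s' maya_shift_maya interleave_maya_of_set set_map_interleave ..
  ultimately show thesis by (rule that)
qed

lemma poly_He_part_partition_of_maya:
  assumes "distinct ns"
  shows "poly (He_part (partition_of_maya (maya_of_set (set ns)))) x = hermite_quotient ns x"
proof -
  let ?lam = "partition_of_maya (maya_of_set (set ns))" and ?t = "first_gap (set ns)"
  have "poly (He_part ?lam) x = hermite_quotient ([0..<?t] @ map (\<lambda>d. d + ?t) (degvec ?lam)) x"
    by (simp add: poly_He_part hermite_quotient_shift)
  also have "\<dots> = hermite_quotient ns x"
    unfolding hermite_quotient_def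
    by (rule alternant_quotient_mset_eq)
       (metis finite_set mset_degvec_partition_of_maya mset_set_set[OF assms])
  finally show ?thesis .
qed

lemma degvec_nth: "i < length lam \<Longrightarrow> degvec lam ! i = lam ! i + length lam - 1 - i"
  by (simp add: degvec_def)

lemma distinct_degvec:
  assumes "is_partition lam"
  shows "distinct (degvec lam)"
proof -
  have "degvec lam ! j < degvec lam ! i" if "i < j" "j < length lam" for i j
    using sorted_wrt_nth_less[of "(\<ge>)" lam i j] assms that by (simp add: is_partition_def degvec_nth)
  then show ?thesis
    by (auto simp: distinct_conv_nth) (metis linorder_neqE_nat order_less_irrefl)
qed

lemma inj_interleave: "inj interleave"
proof (rule injI)
  fix c c' :: "nat + nat"
  assume "interleave c = interleave c'"
  then show "c = c'" by (cases c; cases c'; simp; presburger)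
qed

lemma distinct_interleave_shifted_degvec:
  assumes "is_partition mu" "is_partition nu"
  shows "distinct (map interleave (map Inl (shifted_degvec s mu) @ map Inr (shifted_degvec s' nu)))"
proof -
  have "distinct (shifted_degvec t lam)" if "is_partition lam" for t lam
    using distinct_degvec[OF that] by (auto simp: shifted_degvec_def distinct_map)
  then have "distinct (map Inl (shifted_degvec s mu) @ map Inr (shifted_degvec s' nu))"
    using assms by (auto simp: distinct_map)
  then show ?thesis
    by (metis distinct_map inj_interleave inj_on_subset subset_UNIV)
qed

lemma real_triangle: "real (n * (n - 1) div 2) = real n * (real n - 1) / 2"
proof (cases n)
  case (Suc m)
  then have "2 * (n * m div 2) = n * m" by simp
  then have "2 * real (n * m div 2) = real n * real m"
    by (metis of_nat_mult of_nat_numeral)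
  then show ?thesis using Suc by simp
qed simp

lemma sum_list_map_add_const: "sum_list (map (\<lambda>n. n + s) ns) = sum_list ns + s * length ns"
  by (induction ns) simp_all

lemma real_sum_list_degvec:
  "real (sum_list (degvec lam)) = real (psize lam) + real (length lam) * (real (length lam) - 1) / 2"
proof -
  let ?n = "length lam"
  have "sum_list (degvec lam) = (\<Sum>i<?n. lam ! i + (?n - Suc i))"
    unfolding degvec_def interv_sum_list_conv_sum_set_nat by (auto simp: atLeast0LessThan intro: sum.cong)
  also have "\<dots> = (\<Sum>i<?n. lam ! i) + (\<Sum>i<?n. ?n - Suc i)"
    by (rule sum.distrib)
  also have "\<dots> = psize lam + (\<Sum>i<?n. i)"
    using sum.nat_diff_reindex[of "\<lambda>i. i" ?n] by (simp add: psize_def sum_list_sum_nth atLeast0LessThan)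
  finally show ?thesis using real_triangle[of ?n] by (simp add: sum_lessThan_id)
qed

lemma real_sum_list_shifted_degvec:
  "real (sum_list (shifted_degvec s lam))
     = real (psize lam) + real (s + length lam) * (real (s + length lam) - 1) / 2"
proof -
  have "sum_list (shifted_degvec s lam) = sum_list [0..<s] + (sum_list (degvec lam) + s * length lam)"
    by (simp add: shifted_degvec_def sum_list_map_add_const)
  moreover have "real (sum_list [0..<s]) = real s * (real s - 1) / 2"
    using sum_lessThan_id[of s] real_triangle[of s] by (simp add: atLeast0LessThan)
  ultimately show ?thesis
    by (simp only: of_nat_add of_nat_mult real_sum_list_degvec) (simp add: field_simps)
qed

subsection \<open>Hermite Wronskians as Laguerre Wronskians\<close>

lemma prod_nth_eq_prod_list: "(\<Prod>j<length xs. f (xs ! j)) = prod_list (map f xs)"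
  by (simp add: prod.list_conv_set_nth atLeast0LessThan)

lemma prod_He_scale:
  "(\<Prod>j<length (map Inl as @ map Inr bs). He_scale ((map Inl as @ map Inr bs) ! j))
     = 2 ^ (sum_list as + sum_list bs) * sqrt 2 ^ length bs"
proof -
  have "prod_list (map (\<lambda>a. (2::real) ^ a) as) = 2 ^ sum_list as"
    by (induction as) (simp_all add: power_add)
  moreover have "prod_list (map (\<lambda>b. 2 ^ b * sqrt 2) bs) = 2 ^ sum_list bs * sqrt 2 ^ length bs"
    by (induction bs) (simp_all add: power_add)
  ultimately show ?thesis
    unfolding prod_nth_eq_prod_list by (simp add: comp_def power_add)
qed
lemma hermite_laguerre_prefactor:
  fixes x :: real and a k SA SB pm pn :: nat
  assumes x: "x > 0"
    and SA: "real SA = real pm + real a * (real a - 1) / 2"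
    and SB: "real SB = real pn + real (a + k) * (real (a + k) - 1) / 2"
  defines "N \<equiv> a + (a + k)"
  shows "x ^ (N * (N - 1) div 2) * (2 ^ (SA + SB) * sqrt 2 ^ (a + k)) / 2 ^ (N * (N - 1) div 2)
       = 2 ^ (pm + pn) * x ^ (k * (k + 1) div 2) * (x\<^sup>2 / 2) powr ((real a - 1/2) * real (a + k))"
proof -
  let ?P = "N * (N - 1) div 2" and ?K = "k * (k + 1) div 2" and ?e = "(real a - 1/2) * real (a + k)"
  have pow_x: "x ^ n = x powr real n" for n
    using x by (simp add: powr_realpow)
  have pow_2: "(2::real) ^ n = 2 powr real n" for n
    by (simp add: powr_realpow)
  have sqrt_2: "sqrt 2 ^ n = 2 powr (real n / 2)" for n
    using powr_power[of "2::real" "1/2" n] by (simp add: powr_half_sqrt)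
  have half_square: "(x\<^sup>2 / 2) powr ?e = x powr (2 * ?e) / 2 powr ?e"
  proof -
    have "x\<^sup>2 = x powr 2" using x by simp
    then have "(x\<^sup>2) powr ?e = x powr (2 * ?e)" by (simp only: powr_powr)
    then show ?thesis using x by (simp add: powr_divide)
  qed
  have P: "real ?P = real ?K + 2 * ?e"
    using real_triangle[of N] real_triangle[of "k + 1"]
    by (simp add: N_def field_simps)
  have two: "real SA + real SB + real (a + k) / 2 - real ?P + ?e = real pm + real pn"
    using real_triangle[of N] by (simp add: SA SB N_def field_simps)
  have "x ^ ?P * (2 ^ (SA + SB) * sqrt 2 ^ (a + k)) / 2 ^ ?P / (x\<^sup>2 / 2) powr ?e
      = (x powr real ?P / x powr (2 * ?e))
        * (2 powr real SA * 2 powr real SB * 2 powr (real (a + k) / 2) * 2 powr ?e / 2 powr real ?P)"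
    unfolding half_square unfolding pow_x pow_2 sqrt_2 using x by (simp add: field_simps powr_add)
  also have "\<dots> = x powr (real ?P - 2 * ?e) * 2 powr (real SA + real SB + real (a + k) / 2 - real ?P + ?e)"
    by (simp add: powr_add[symmetric] powr_diff[symmetric] algebra_simps)
  also have "\<dots> = x ^ ?K * 2 ^ (pm + pn)"
    unfolding two unfolding P pow_x pow_2 by simp
  finally show ?thesis
    using x by (simp add: field_simps)
qed

lemma minus_half_not_Ints: "- 1/2 \<notin> (\<int> :: real set)"
proof
  assume "- 1/2 \<in> (\<int> :: real set)"
  then obtain m where "- 1/2 = real_of_int m" by (auto elim: Ints_cases)
  then have "real_of_int (2 * m) = - 1" by simp
  then have "2 * m = - 1" by linarith
  then show False by presburger
qed

lemma laguerre_pair_eq_degs_shifted: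
  assumes "z > 0"
  shows "laguerre_pair (- 1/2 + real s - real s') mu nu z
       = laguerre_pair_degs (- 1/2) (shifted_degvec s mu) (shifted_degvec s' nu) z"
proof -
  have "laguerre_pair_degs (- 1/2) (shifted_degvec s mu) (shifted_degvec s' nu) z
      = laguerre_pair_degs (- 1/2 + real s) (degvec mu) (shifted_degvec s' nu) z"
    unfolding shifted_degvec_def by (rule laguerre_pair_degs_shift_Inl[OF minus_half_not_Ints assms])
  also have "\<dots> = laguerre_pair_degs (- 1/2 + real s - real s') (degvec mu) (degvec nu) z"
    unfolding shifted_degvec_def
    by (rule laguerre_pair_degs_shift_Inr[OF not_Ints_add_of_nat[OF minus_half_not_Ints] assms])
  finally show ?thesis by (simp add: laguerre_pair_eq_degs[OF assms])
qed

lemma hermite_quotient_interleave_eq_laguerre_pair_pos: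
  fixes mu nu :: "nat list" and s s' k :: nat and x :: real
  assumes len: "s' + length nu = s + length mu + k" and x: "x > 0"
  shows "hermite_quotient (map interleave (map Inl (shifted_degvec s mu) @ map Inr (shifted_degvec s' nu))) x
       = 2 ^ (psize mu + psize nu) * x ^ (k * (k + 1) div 2)
         * laguerre_pair (- 1/2 + real s - real s') mu nu (x\<^sup>2 / 2)"
proof -
  define As Bs where "As = shifted_degvec s mu" and "Bs = shifted_degvec s' nu"
  define a where "a = s + length mu"
  let ?cs = "map Inl As @ map Inr Bs" and ?z = "x\<^sup>2 / 2" and ?N = "a + (a + k)"
  have lens: "length As = a" "length Bs = a + k"
    using len by (simp_all add: As_def Bs_def a_def shifted_degvec_def)
  have "?z > 0" using x by simp
  then have "laguerre_pair (- 1/2 + real s - real s') mu nu ?z = laguerre_pair_degs (- 1/2) As Bs ?z"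
    unfolding As_def Bs_def by (rule laguerre_pair_eq_degs_shifted)
  also have "\<dots> = ?z powr ((real a - 1/2) * real (a + k)) * lag_quotient (- 1/2) ?cs ?z"
    by (simp add: laguerre_pair_degs_def lens)
  finally have L: "laguerre_pair (- 1/2 + real s - real s') mu nu ?z
      = ?z powr ((real a - 1/2) * real (a + k)) * lag_quotient (- 1/2) ?cs ?z" .
  have H: "hermite_quotient (map interleave ?cs) x
      = x ^ (?N * (?N - 1) div 2) * (2 ^ (sum_list As + sum_list Bs) * sqrt 2 ^ (a + k))
        / 2 ^ (?N * (?N - 1) div 2) * lag_quotient (- 1/2) ?cs ?z"
    using hermite_quotient_interleave[OF x, of ?cs, unfolded prod_He_scale] by (simp add: lens)
  have "real (sum_list As) = real (psize mu) + real a * (real a - 1) / 2"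
    "real (sum_list Bs) = real (psize nu) + real (a + k) * (real (a + k) - 1) / 2"
    using len by (simp_all add: As_def Bs_def a_def real_sum_list_shifted_degvec)
  note prefactor = hermite_laguerre_prefactor[OF x this]
  show ?thesis
    unfolding As_def[symmetric] Bs_def[symmetric] H L by (subst prefactor) (simp only: mult.assoc)
qed

lemma even_sum_interleave_plus_triangles:
  assumes "length bs = length as + k"
  defines "N \<equiv> length as + length bs"
  shows "even (sum_list (map interleave (map Inl as @ map Inr bs)) + N * (N - 1) div 2 + k * (k + 1) div 2)"
proof -
  let ?a = "length as"
  have "sum_list (map interleave (map Inl as @ map Inr bs)) = 2 * (sum_list as + sum_list bs) + length bs"
    by (induction as) (simp_all, induction bs, simp_all)
  then have "sum_list (map interleave (map Inl as @ map Inr bs)) + N * (N - 1) div 2 + k * (k + 1) div 2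
      = 2 * (sum_list as + sum_list bs) + (length bs + N * (N - 1) div 2 + k * (k + 1) div 2)"
    by simp
  also have "length bs + N * (N - 1) div 2 + k * (k + 1) div 2 = 2 * (?a * ?a + ?a * k) + k * (k + 1)"
  proof -
    have "real (length bs + N * (N - 1) div 2 + k * (k + 1) div 2) = real (2 * (?a * ?a + ?a * k) + k * (k + 1))"
      using real_triangle[of N] real_triangle[of "k + 1"] assms(1)
      by (simp add: N_def field_simps)
    then show ?thesis by (simp only: of_nat_eq_iff)
  qed
  finally show ?thesis by simp
qed

lemma hermite_quotient_interleave_eq_laguerre_pair:
  fixes mu nu :: "nat list" and s s' k :: nat and x :: real
  assumes len: "s' + length nu = s + length mu + k" and "x \<noteq> 0"
  shows "hermite_quotient (map interleave (map Inl (shifted_degvec s mu) @ map Inr (shifted_degvec s' nu))) x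
       = 2 ^ (psize mu + psize nu) * x ^ (k * (k + 1) div 2)
         * laguerre_pair (- 1/2 + real s - real s') mu nu (x\<^sup>2 / 2)"
proof (cases "x > 0")
  case False
  let ?ns = "map interleave (map Inl (shifted_degvec s mu) @ map Inr (shifted_degvec s' nu))"
  let ?E = "sum_list ?ns + length ?ns * (length ?ns - 1) div 2" and ?K = "k * (k + 1) div 2"
  have "- x > 0" using False assms(2) by simp
  have "length (shifted_degvec s' nu) = length (shifted_degvec s mu) + k"
    using len by (simp add: shifted_degvec_def)
  from even_sum_interleave_plus_triangles[OF this] have "even (?E + ?K)"
    by (simp only: length_map length_append)
  then have "(-1::real) ^ (?E + ?K) = 1"
    by (rule neg_one_even_power)
  then have sign: "(-1) ^ ?E * (- x) ^ ?K = x ^ ?K"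
    by (simp only: power_minus[of x] mult.assoc[symmetric] power_add[symmetric] mult_1_left)
  have "hermite_quotient ?ns x = (-1) ^ ?E * hermite_quotient ?ns (- x)"
    using hermite_quotient_minus[of ?ns "- x"] by (simp only: minus_minus)
  also have "\<dots> = 2 ^ (psize mu + psize nu) * ((-1) ^ ?E * (- x) ^ ?K)
      * laguerre_pair (- 1/2 + real s - real s') mu nu (x\<^sup>2 / 2)"
    unfolding hermite_quotient_interleave_eq_laguerre_pair_pos[OF len \<open>- x > 0\<close>] power2_minus
    by (simp only: mult_ac)
  finally show ?thesis unfolding sign .
qed (use hermite_quotient_interleave_eq_laguerre_pair_pos[OF len] in blast)

theorem proposition6p1:
  fixes lam mu nu :: "nat list" and k :: nat and x :: real
  assumes "is_partition mu" and "is_partition nu"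
    and "lam = Phi mu nu (int k)"
    and "x \<noteq> 0"
  shows "poly (He_part lam) x =
           2 ^ (psize mu + psize nu) * x ^ (k * (k + 1) div 2)
           * laguerre_pair (- 1/2 - real (length mu) + real (length nu) - real k) mu nu (x\<^sup>2 / 2)"
proof -
  obtain s s' where len: "s' + length nu = s + length mu + k"
    and lam: "lam = partition_of_maya (maya_of_set (set (map interleave
                 (map Inl (shifted_degvec s mu) @ map Inr (shifted_degvec s' nu)))))"
    using Phi_eq_partition_of_maya_interleave assms(3) by metis
  have "- 1/2 - real (length mu) + real (length nu) - real k = - 1/2 + real s - real s'"
    using len by linarith
  then show ?thesis
    unfolding lam
    by (simp only: poly_He_part_partition_of_maya[OF distinct_interleave_shifted_degvec[OF assms(1,2)]]
          hermite_quotient_interleave_eq_laguerre_pair[OF len assms(4)])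
qed

end
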